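(* Let $R$ be a commutative ring, $A=\mathrm{S}_4(R)$ and $M=\mathrm{M}_3(R)$. Then $H^n(A,M/A)$ is a free $R$-module for all $n\ge0$, with $\mathrm{rank}_RH^0(A,M/A)=4$ and $\mathrm{rank}_RH^n(A,M/A)=3\cdot2^n$ for $n\ge1$.
   Context: $\mathrm{S}_4(R)=\left\{\begin{pmatrix}a&b&c\\0&a&0\\0&0&a\end{pmatrix}\mid a,b,c\in R\right\}\subseteq\mathrm{M}_3(R)$. $H^n$ is Hochschild cohomology, with $M/A$ an $A$-bimodule via matrix multiplication. *)

theory Defs
  imports "Jordan_Normal_Form.Matrix"
begin

definition M3 :: "'r::comm_ring_1 mat set" where
  "M3 = carrier_mat 3 3"

definition S4_mat :: "'r::comm_ring_1 \<Rightarrow> 'r \<Rightarrow> 'r \<Rightarrow> 'r mat" where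
  "S4_mat a b c = mat 3 3 (\<lambda>(i,j). if i = j then a
                                    else if i = 0 \<and> j = 1 then b
                                    else if i = 0 \<and> j = 2 then c
                                    else 0)"

definition S4 :: "'r::comm_ring_1 mat set" where
  "S4 = {S4_mat a b c | a b c. True}"

text \<open>A map A^n \<rightarrow> M/A is represented by a function to M (a choice of
  representatives); two such functions represent the same map iff they are
  pointwise congruent modulo A. All conditions below are stated modulo A.\<close>

definition tuples :: "'a set \<Rightarrow> nat \<Rightarrow> 'a list set" where
  "tuples A n = {xs. length xs = n \<and> set xs \<subseteq> A}"

definition cochain :: "'r::comm_ring_1 mat set \<Rightarrow> nat \<Rightarrow> ('r mat list \<Rightarrow> 'r mat) \<Rightarrow> bool" where
  "cochain A n f \<longleftrightarrow>
     (\<forall>xs\<in>tuples A n. f xs \<in> M3) \<and>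
     (\<forall>xs\<in>tuples A n. \<forall>i<n. \<forall>x\<in>A. \<forall>y\<in>A. \<forall>r s.
        f (xs[i := r \<cdot>\<^sub>m x + s \<cdot>\<^sub>m y]) - (r \<cdot>\<^sub>m f (xs[i := x]) + s \<cdot>\<^sub>m f (xs[i := y])) \<in> A)"

text \<open>Hochschild differential C^n \<rightarrow> C^(n+1), with xs = [x_1,...,x_(n+1)]:
  (df)(x_1..x_(n+1)) = x_1 f(x_2..x_(n+1)) + sum_(i=1..n) (-1)^i f(..,x_i x_(i+1),..)
                        + (-1)^(n+1) f(x_1..x_n) x_(n+1).\<close>
definition hdiff :: "nat \<Rightarrow> ('r::comm_ring_1 mat list \<Rightarrow> 'r mat) \<Rightarrow> 'r mat list \<Rightarrow> 'r mat" where
  "hdiff n f xs = mat 3 3 (\<lambda>(p,q).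
       ((xs ! 0) * f (drop 1 xs)) $$ (p,q)
     + (\<Sum>i<n. (-1) ^ (i+1) * (f (take i xs @ [xs ! i * xs ! (i+1)] @ drop (i+2) xs)) $$ (p,q))
     + (-1) ^ (n+1) * (f (take n xs) * xs ! n) $$ (p,q))"

definition cocycle :: "'r::comm_ring_1 mat set \<Rightarrow> nat \<Rightarrow> ('r mat list \<Rightarrow> 'r mat) \<Rightarrow> bool" where
  "cocycle A n f \<longleftrightarrow> cochain A n f \<and> (\<forall>xs\<in>tuples A (Suc n). hdiff n f xs \<in> A)"

definition coboundary :: "'r::comm_ring_1 mat set \<Rightarrow> nat \<Rightarrow> ('r mat list \<Rightarrow> 'r mat) \<Rightarrow> bool" where
  "coboundary A n f \<longleftrightarrow>
     (n = 0 \<and> f [] \<in> A) \<or>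
     (\<exists>m g. n = Suc m \<and> cochain A m g \<and> (\<forall>xs\<in>tuples A n. f xs - hdiff m g xs \<in> A))"

definition lincomb :: "nat \<Rightarrow> (nat \<Rightarrow> 'r::comm_ring_1) \<Rightarrow> (nat \<Rightarrow> 'r mat list \<Rightarrow> 'r mat) \<Rightarrow> 'r mat list \<Rightarrow> 'r mat" where
  "lincomb k r c xs = mat 3 3 (\<lambda>(p,q). \<Sum>l<k. r l * (c l xs) $$ (p,q))"

definition HH_free_of_rank :: "'r::comm_ring_1 mat set \<Rightarrow> nat \<Rightarrow> nat \<Rightarrow> bool" where
  "HH_free_of_rank A n k \<longleftrightarrow>
     (\<exists>c. (\<forall>l<k. cocycle A n (c l)) \<and>
          (\<forall>z. cocycle A n z \<longrightarrow> (\<exists>r. coboundary A n (\<lambda>xs. z xs - lincomb k r c xs))) \<and>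
          (\<forall>r. coboundary A n (lincomb k r c) \<longrightarrow> (\<forall>l<k. r l = 0)))"

end

theory Submission
  imports Defs
begin

text \<open>
  \<open>M/A\<close> is a free \<open>R\<close>-module with six explicit coordinates, on which left and right
  multiplication by \<open>A\<close> act by explicit formulas. Every cocycle is cohomologous to a normalized
  one, i.e.\ one vanishing as soon as some argument is \<open>1\<close>. Since \<open>A\<close> is spanned by \<open>1\<close>,
  \<open>b = E\<^sub>0\<^sub>1\<close> and \<open>c = E\<^sub>0\<^sub>2\<close>, a normalized cochain is determined by its values on words
  in the letters \<open>b, c\<close>; and as all products of letters vanish, on words the Hochschild
  differential reduces to its two outer terms. The cocycle and coboundary conditions thus
  become explicit linear conditions on the coordinates of the values on words: in degree
  \<open>n \<ge> 1\<close> exactly three coordinates per word of length \<open>n\<close> survive, giving rank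
  \<open>3 \<cdot> 2^n\<close>, while in degree \<open>0\<close> four of the six coordinates are \<open>A\<close>-invariant.
\<close>

lemma sum_lessThan_3: "(\<Sum>i::nat<3. f i) = f 0 + f 1 + (f 2::'a::comm_monoid_add)"
  by (simp add: eval_nat_numeral)

lemma sum_lessThan_4: "(\<Sum>l::nat<4. f l) = f 0 + f 1 + f 2 + (f 3 :: 'a::comm_monoid_add)"
  by (simp add: eval_nat_numeral)

lemma sum_add_ivl: "(\<Sum>l<(p::nat) + q. f l) = (\<Sum>l<p. f l) + (\<Sum>i<q. (f (p + i)::'a::comm_monoid_add))"
  by (induction q) (simp_all add: add.assoc)

lemma sum_blocks: "(\<Sum>l<(a::nat) * N. f l) = (\<Sum>t<a. \<Sum>i<N. (f (t * N + i) :: 'a::comm_monoid_add))"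
proof (induction a)
  case 0 then show ?case by simp
next
  case (Suc a)
  have "(\<Sum>l<Suc a * N. f l) = (\<Sum>l<a * N + N. f l)" by (simp add: add.commute)
  also have "\<dots> = (\<Sum>l<a * N. f l) + (\<Sum>i<N. f (a * N + i))" by (rule sum_add_ivl)
  finally show ?case using Suc by simp
qed

lemma sum_split_at: "k \<le> N \<Longrightarrow> (\<Sum>i\<le>N. g i) = (\<Sum>i\<le>k. g i) + (\<Sum>i\<in>{Suc k..N}. (g i::'a::comm_monoid_add))"
proof -
  assume "k \<le> N"
  then have "{..N} = {..k} \<union> {Suc k..N}" by auto
  then show ?thesis by (simp add: sum.union_disjoint)
qed

lemma sum_triangle_swap: "(\<Sum>k\<le>N. \<Sum>i\<le>k. h i k) = (\<Sum>j\<le>(N::nat). \<Sum>i\<in>{j..N}. (h j i::'a::comm_monoid_add))"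
proof -
  have "(\<Sum>j\<le>N. \<Sum>i\<in>{j..N}. h j i) = (\<Sum>j\<in>{..N}. \<Sum>i\<in>{i. i \<in> {..N} \<and> j \<le> i}. h j i)"
    by (intro sum.cong refl) auto
  also have "\<dots> = (\<Sum>i\<in>{..N}. \<Sum>j\<in>{j. j\<in>{..N} \<and> j \<le> i}. h j i)"
    by (rule sum.swap_restrict) auto
  also have "\<dots> = (\<Sum>k\<le>N. \<Sum>i\<le>k. h i k)"
    by (intro sum.cong refl) auto
  finally show ?thesis by simp
qed

lemma alternating_double_sum_eq_0:
  fixes T :: "nat \<Rightarrow> nat \<Rightarrow> 'a::comm_ring_1"
  assumes T: "\<And>i j. i < j \<Longrightarrow> j \<le> Suc N \<Longrightarrow> T j i = T i (j - 1)"
  shows "(\<Sum>j\<le>Suc N. \<Sum>i\<le>N. (-1)^(j+i) * T j i) = 0"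
proof -
  have sp: "(\<Sum>i\<le>N. g i) = (\<Sum>i<j. g i) + (\<Sum>i\<in>{j..N}. g i)" if "j \<le> Suc N" for j and g :: "nat \<Rightarrow> 'a"
  proof -
    have "{..N} = {..<j} \<union> {j..N}" using that by auto
    then show ?thesis by (simp add: sum.union_disjoint ivl_disj_int)
  qed
  have A: "(\<Sum>j\<le>Suc N. \<Sum>i\<le>N. (-1)^(j+i) * T j i) = (\<Sum>j\<le>Suc N. \<Sum>i<j. (-1)^(j+i) * T j i) + (\<Sum>j\<le>Suc N. \<Sum>i\<in>{j..N}. (-1)^(j+i) * T j i)"
    by (simp add: sum.distrib[symmetric] sp)
  have B: "(\<Sum>j\<le>Suc N. \<Sum>i<j. (-1)^(j+i) * T j i) = - (\<Sum>k\<le>N. \<Sum>i\<le>k. (-1)^(i+k) * T i k)"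
  proof -
    have "(\<Sum>j\<le>Suc N. \<Sum>i<j. (-1)^(j+i) * T j i) = (\<Sum>k\<le>N. \<Sum>i<Suc k. (-1)^(Suc k+i) * T (Suc k) i)"
      by (subst sum.atMost_Suc_shift) simp
    also have "\<dots> = (\<Sum>k\<le>N. \<Sum>i\<le>k. - ((-1)^(i+k) * T i k))"
      by (intro sum.cong refl) (auto simp: lessThan_Suc_atMost T add.commute)
    finally show ?thesis by (simp only: sum_negf)
  qed
  have C: "(\<Sum>j\<le>Suc N. \<Sum>i\<in>{j..N}. (-1)^(j+i) * T j i) = (\<Sum>j\<le>N. \<Sum>i\<in>{j..N}. (-1)^(j+i) * T j i)"
    by simp
  show ?thesis unfolding A B C sum_triangle_swap[where N=N and h="\<lambda>i k. (-1)^(i+k) * T i k"] by (simp add: add.commute)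
qed

lemma alternating_sum_pair_eq_0:
  fixes a :: "nat \<Rightarrow> 'a::comm_ring_1"
  assumes "j < N" "\<And>i. i \<le> N \<Longrightarrow> i \<noteq> j \<Longrightarrow> i \<noteq> Suc j \<Longrightarrow> a i = 0" "a j = a (Suc j)"
  shows "(\<Sum>i\<le>N. (-1)^i * a i) = 0"
proof -
  have "(\<Sum>i\<le>N. (-1)^i * a i) = (\<Sum>i\<in>{j, Suc j}. (-1)^i * a i)"
    by (rule sum.mono_neutral_right) (use assms in auto)
  then show ?thesis using assms(3) by simp
qed

lemma minus_one_power_mult_eq_0D: "(-1::'r::comm_ring_1)^x * y = 0 \<Longrightarrow> y = 0"
proof -
  assume h: "(-1::'r)^x * y = 0"
  have "y = ((-1::'r)^x * (-1)^x) * y" by (simp add: power_mult_distrib[symmetric])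
  also have "\<dots> = (-1)^x * ((-1)^x * y)" by (simp add: mult.assoc)
  finally show "y = 0" using h by simp
qed

lemma less_3_cases: "(i::nat) < 3 \<Longrightarrow> i = 0 \<or> i = 1 \<or> i = 2" by auto

lemma less_6_cases: "(i::nat) < 6 \<Longrightarrow> i = 0 \<or> i = 1 \<or> i = 2 \<or> i = 3 \<or> i = 4 \<or> i = 5" by auto

lemma index_mult_mat_3: 
  assumes "A \<in> carrier_mat 3 3" "B \<in> carrier_mat 3 3" "i < 3" "j < 3"
  shows "(A * B) $$ (i,j) = A$$(i,0)*B$$(0,j) + A$$(i,1)*B$$(1,j) + A$$(i,2)*B$$(2,j)"
  using assms by (simp add: scalar_prod_def atLeast0LessThan sum_lessThan_3)

lemma mat_3_eqI:
  assumes "A \<in> carrier_mat 3 3" "B \<in> carrier_mat 3 3"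
  "A$$(0,0) = B$$(0,0)" "A$$(0,1) = B$$(0,1)" "A$$(0,2) = B$$(0,2)"
  "A$$(1,0) = B$$(1,0)" "A$$(1,1) = B$$(1,1)" "A$$(1,2) = B$$(1,2)"
  "A$$(2,0) = B$$(2,0)" "A$$(2,1) = B$$(2,1)" "A$$(2,2) = B$$(2,2)"
  shows "A = B"
proof (rule eq_matI)
  fix i j assume "i < dim_row B" "j < dim_col B"
  then have "i < 3" "j < 3" using assms by auto
  then show "A $$ (i, j) = B $$ (i, j)" using assms
    by (auto dest!: less_3_cases)
qed (use assms in auto)

lemma mat_lin_right: "x \<in> carrier_mat 3 3 \<Longrightarrow> y \<in> carrier_mat 3 3 \<Longrightarrow> (z::'r::comm_ring_1 mat) \<in> carrier_mat 3 3 \<Longrightarrow>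
   (r \<cdot>\<^sub>m x + s \<cdot>\<^sub>m y) * z = r \<cdot>\<^sub>m (x * z) + s \<cdot>\<^sub>m (y * z)"
  by (subst add_mult_distrib_mat[of _ 3 3]) (auto simp: mult_smult_assoc_mat[of _ 3 3 _ 3])

lemma mat_lin_left: "x \<in> carrier_mat 3 3 \<Longrightarrow> y \<in> carrier_mat 3 3 \<Longrightarrow> (z::'r::comm_ring_1 mat) \<in> carrier_mat 3 3 \<Longrightarrow>
   z * (r \<cdot>\<^sub>m x + s \<cdot>\<^sub>m y) = r \<cdot>\<^sub>m (z * x) + s \<cdot>\<^sub>m (z * y)"
  by (subst mult_add_distrib_mat[of _ 3 3]) (auto simp: mult_smult_distrib[of _ 3 3 _ 3])

definition Eij :: "nat \<Rightarrow> nat \<Rightarrow> 'r::comm_ring_1 mat" where "Eij a b = mat 3 3 (\<lambda>(p,q). if p = a \<and> q = b then 1 else 0)"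

lemma Eij_carrier[simp]: "Eij a b \<in> carrier_mat 3 3" by (simp add: Eij_def)

section \<open>The algebra S4 and coordinates on M/A\<close>

lemma S4_mat_carrier[simp]: "S4_mat a b c \<in> carrier_mat 3 3"
  by (simp add: S4_mat_def)

lemma S4_mat_index[simp]:
  "S4_mat a b c $$ (0,0) = a" "S4_mat a b c $$ (1,1) = a" "S4_mat a b c $$ (2,2) = a"
  "S4_mat a b c $$ (0,1) = b" "S4_mat a b c $$ (0,2) = c"
  "S4_mat a b c $$ (1,0) = 0" "S4_mat a b c $$ (2,0) = 0" "S4_mat a b c $$ (1,2) = 0" "S4_mat a b c $$ (2,1) = 0"
  by (simp_all add: S4_mat_def)

lemma S4_mat_dim[simp]: "dim_row (S4_mat a b c) = 3" "dim_col (S4_mat a b c) = 3"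
  by (simp_all add: S4_mat_def)

lemma S4_mat_index'[simp]:
  "S4_mat a b c $$ (Suc 0,Suc 0) = a"
  "S4_mat a b c $$ (0,Suc 0) = b" 
  "S4_mat a b c $$ (Suc 0,0) = 0" "S4_mat a b c $$ (Suc 0,2) = 0" "S4_mat a b c $$ (2,Suc 0) = 0"
  by (simp_all add: S4_mat_def)

lemma S4_iff:
  "(m::'r::comm_ring_1 mat) \<in> S4 \<longleftrightarrow> (m \<in> carrier_mat 3 3 \<and> m$$(1,0) = 0 \<and> m$$(2,0) = 0 \<and> m$$(1,2) = 0 \<and> m$$(2,1) = 0
     \<and> m$$(1,1) = m$$(0,0) \<and> m$$(2,2) = m$$(0,0))"
proof
  assume "m \<in> S4"
  then obtain a b c where "m = S4_mat a b c" by (auto simp: S4_def)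
  then show "m \<in> carrier_mat 3 3 \<and> m$$(1,0) = 0 \<and> m$$(2,0) = 0 \<and> m$$(1,2) = 0 \<and> m$$(2,1) = 0
     \<and> m$$(1,1) = m$$(0,0) \<and> m$$(2,2) = m$$(0,0)" by simp
next
  assume H: "m \<in> carrier_mat 3 3 \<and> m$$(1,0) = 0 \<and> m$$(2,0) = 0 \<and> m$$(1,2) = 0 \<and> m$$(2,1) = 0
     \<and> m$$(1,1) = m$$(0,0) \<and> m$$(2,2) = m$$(0,0)"
  have "m = S4_mat (m$$(0,0)) (m$$(0,1)) (m$$(0,2))"
    by (rule mat_3_eqI) (use H in auto)
  then show "m \<in> S4" unfolding S4_def by blast
qed

lemma S4_carrier: "x \<in> (S4::'r::comm_ring_1 mat set) \<Longrightarrow> x \<in> carrier_mat 3 3"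
  by (simp add: S4_iff)

lemma S4_mat_mult: "S4_mat a b c * S4_mat a' b' c' = S4_mat (a*a') (a*b'+b*a') (a*c'+c*a')"
  by (rule mat_3_eqI) (auto simp del: index_mult_mat simp add: index_mult_mat_3 algebra_simps mult_carrier_mat[of _ 3 3 _ 3])

lemma S4_mult_closed: "x \<in> S4 \<Longrightarrow> y \<in> S4 \<Longrightarrow> x * y \<in> S4"
  unfolding S4_def using S4_mat_mult by blast

lemma S4_add_closed: "x \<in> S4 \<Longrightarrow> y \<in> S4 \<Longrightarrow> x + y \<in> (S4::'r::comm_ring_1 mat set)"
  unfolding S4_iff by auto

lemma S4_smult_closed: "x \<in> S4 \<Longrightarrow> r \<cdot>\<^sub>m x \<in> (S4::'r::comm_ring_1 mat set)"
  unfolding S4_iff by auto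

lemma S4_zero: "0\<^sub>m 3 3 \<in> (S4::'r::comm_ring_1 mat set)"
  unfolding S4_iff by auto

lemma S4_one: "1\<^sub>m 3 \<in> (S4::'r::comm_ring_1 mat set)"
  unfolding S4_iff by auto

lemma S4_lincomb_closed: "x \<in> S4 \<Longrightarrow> y \<in> S4 \<Longrightarrow> r \<cdot>\<^sub>m x + s \<cdot>\<^sub>m y \<in> (S4::'r::comm_ring_1 mat set)"
  by (intro S4_add_closed S4_smult_closed)

definition gen_b :: "'r::comm_ring_1 mat" where "gen_b = S4_mat 0 1 0"

definition gen_c :: "'r::comm_ring_1 mat" where "gen_c = S4_mat 0 0 1"

definition S4_basis :: "'r::comm_ring_1 mat set" where "S4_basis = {1\<^sub>m 3, gen_b, gen_c}"

lemma gen_b_S4[simp]: "gen_b \<in> S4" and gen_c_S4[simp]: "gen_c \<in> S4"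
  unfolding gen_b_def gen_c_def S4_def by blast+

lemma S4_basis_subset: "S4_basis \<subseteq> S4"
  unfolding S4_basis_def using S4_one by auto

lemma S4_decomp: "x \<in> S4 \<Longrightarrow> x = (x$$(0,0)) \<cdot>\<^sub>m 1\<^sub>m 3 + 1 \<cdot>\<^sub>m ((x$$(0,1)) \<cdot>\<^sub>m gen_b + (x$$(0,2)) \<cdot>\<^sub>m gen_c)"
  by (rule mat_3_eqI) (auto simp: S4_iff gen_b_def gen_c_def)

text \<open>Coordinates on \<open>M/A \<cong> R\<^sup>6\<close>.\<close>

definition qcoord :: "nat \<Rightarrow> 'r::comm_ring_1 mat \<Rightarrow> 'r" where
  "qcoord c m = (if c = 0 then m$$(1,0) else if c = 1 then m$$(2,0) else if c = 2 then m$$(1,2)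
     else if c = 3 then m$$(2,1) else if c = 4 then m$$(1,1) - m$$(2,2) else m$$(0,0) - m$$(2,2))"

lemma S4_iff_qcoord: "(m::'r::comm_ring_1 mat) \<in> carrier_mat 3 3 \<Longrightarrow> m \<in> S4 \<longleftrightarrow> (\<forall>c<6. qcoord c m = 0)"
  unfolding S4_iff qcoord_def
  by (rule iffI) (auto simp: eval_nat_numeral less_Suc_eq)

lemma qcoord_add: "m1 \<in> carrier_mat 3 3 \<Longrightarrow> m2 \<in> carrier_mat 3 3 \<Longrightarrow> qcoord c (m1 + m2) = qcoord c m1 + qcoord c m2"
  by (simp add: qcoord_def)

lemma qcoord_minus: "m1 \<in> carrier_mat 3 3 \<Longrightarrow> m2 \<in> carrier_mat 3 3 \<Longrightarrow> qcoord c (m1 - m2) = qcoord c m1 - qcoord c m2"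
  by (simp add: qcoord_def)

lemma qcoord_smult: "m \<in> carrier_mat 3 3 \<Longrightarrow> qcoord c (r \<cdot>\<^sub>m m) = r * qcoord c m"
  by (simp add: qcoord_def right_diff_distrib)

lemma qcoord_zero[simp]: "qcoord c (0\<^sub>m 3 3) = 0"
  by (simp add: qcoord_def)

text \<open>The left and right actions of \<open>x \<in> A\<close> on \<open>M/A\<close>, in these coordinates.\<close>

definition lcoord :: "'r::comm_ring_1 mat \<Rightarrow> nat \<Rightarrow> (nat \<Rightarrow> 'r) \<Rightarrow> 'r" where
  "lcoord x c k = (if c = 5 then x$$(0,0) * k 5 + x$$(0,1) * k 0 + x$$(0,2) * k 1 else x$$(0,0) * k c)"

definition rcoord :: "'r::comm_ring_1 mat \<Rightarrow> nat \<Rightarrow> (nat \<Rightarrow> 'r) \<Rightarrow> 'r" where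
  "rcoord x c k = (if c = 2 then x$$(0,0) * k 2 + x$$(0,2) * k 0
     else if c = 3 then x$$(0,0) * k 3 + x$$(0,1) * k 1
     else if c = 4 then x$$(0,0) * k 4 + x$$(0,1) * k 0 - x$$(0,2) * k 1
     else if c = 5 then x$$(0,0) * k 5 - x$$(0,2) * k 1
     else x$$(0,0) * k c)"

lemma qcoord_mult_left:
  assumes "x \<in> S4" "m \<in> carrier_mat 3 3" "c < 6"
  shows "qcoord c (x * m) = lcoord x c (\<lambda>d. qcoord d m)"
proof -
  obtain a b cc where x: "x = S4_mat a b cc" using assms(1) unfolding S4_def by auto
  show ?thesis using assms(2,3) unfolding x qcoord_def lcoord_def
    by (auto dest!: less_6_cases simp del: index_mult_mat simp add: index_mult_mat_3 algebra_simps)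
qed

lemma qcoord_mult_right:
  assumes "x \<in> S4" "m \<in> carrier_mat 3 3" "c < 6"
  shows "qcoord c (m * x) = rcoord x c (\<lambda>d. qcoord d m)"
proof -
  obtain a b cc where x: "x = S4_mat a b cc" using assms(1) unfolding S4_def by auto
  show ?thesis using assms(2,3) unfolding x qcoord_def rcoord_def
    by (auto dest!: less_6_cases simp del: index_mult_mat simp add: index_mult_mat_3 algebra_simps)
qed

lemma qcoord_mult_left_zero: "x \<in> S4 \<Longrightarrow> m \<in> carrier_mat 3 3 \<Longrightarrow> c < 6 \<Longrightarrow> (\<And>d. d < 6 \<Longrightarrow> qcoord d m = 0) \<Longrightarrow> qcoord c (x * m) = 0"
  by (simp add: qcoord_mult_left lcoord_def)

lemma qcoord_mult_right_zero: "x \<in> S4 \<Longrightarrow> m \<in> carrier_mat 3 3 \<Longrightarrow> c < 6 \<Longrightarrow> (\<And>d. d < 6 \<Longrightarrow> qcoord d m = 0) \<Longrightarrow> qcoord c (m * x) = 0"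
  by (simp add: qcoord_mult_right rcoord_def)

lemma lcoord_lincomb_mat: "x \<in> carrier_mat 3 3 \<Longrightarrow> y \<in> carrier_mat 3 3 \<Longrightarrow> lcoord (r \<cdot>\<^sub>m x + s \<cdot>\<^sub>m y) c k = r * lcoord x c k + s * lcoord y c k"
  by (simp add: lcoord_def algebra_simps)

lemma rcoord_lincomb_mat: "x \<in> carrier_mat 3 3 \<Longrightarrow> y \<in> carrier_mat 3 3 \<Longrightarrow> rcoord (r \<cdot>\<^sub>m x + s \<cdot>\<^sub>m y) c k = r * rcoord x c k + s * rcoord y c k"
  by (simp add: rcoord_def algebra_simps)

lemma lcoord_lincomb: "lcoord x c (\<lambda>d. r * k1 d + s * k2 d) = r * lcoord x c k1 + s * lcoord x c k2"
  by (simp add: lcoord_def algebra_simps)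

lemma rcoord_lincomb: "rcoord x c (\<lambda>d. r * k1 d + s * k2 d) = r * rcoord x c k1 + s * rcoord x c k2"
  by (simp add: rcoord_def algebra_simps)

lemma lcoord_cong: "(\<And>d. d < 6 \<Longrightarrow> k1 d = k2 d) \<Longrightarrow> c < 6 \<Longrightarrow> lcoord x c k1 = lcoord x c k2"
  by (simp add: lcoord_def)

lemma rcoord_cong: "(\<And>d. d < 6 \<Longrightarrow> k1 d = k2 d) \<Longrightarrow> c < 6 \<Longrightarrow> rcoord x c k1 = rcoord x c k2"
  by (simp add: rcoord_def)

lemma tuples_drop1: "xs \<in> tuples A (Suc n) \<Longrightarrow> drop 1 xs \<in> tuples A n"
  unfolding tuples_def by (auto dest: in_set_dropD)

lemma tuples_take: "xs \<in> tuples A (Suc n) \<Longrightarrow> take n xs \<in> tuples A n"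
  unfolding tuples_def by (auto dest: in_set_takeD)

lemma tuples_nth: "xs \<in> tuples A n \<Longrightarrow> i < n \<Longrightarrow> xs!i \<in> A"
  unfolding tuples_def by auto

lemma tuples_len: "xs \<in> tuples A n \<Longrightarrow> length xs = n"
  unfolding tuples_def by auto

lemma tuples_nth_carrier: "xs \<in> tuples (S4::'r::comm_ring_1 mat set) n \<Longrightarrow> i < n \<Longrightarrow> xs!i \<in> carrier_mat 3 3"
  using tuples_nth S4_carrier by blast

lemma tuples_update: "xs \<in> tuples A n \<Longrightarrow> v \<in> A \<Longrightarrow> xs[i:=v] \<in> tuples A n"
  unfolding tuples_def by (auto dest: set_update_subset_insert[THEN subsetD])

definition merge_at :: "nat \<Rightarrow> 'a::times list \<Rightarrow> 'a list" where
  "merge_at i xs = take i xs @ [xs!i * xs!(i+1)] @ drop (i+2) xs"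

lemma length_merge_at[simp]: "Suc i < length xs \<Longrightarrow> length (merge_at i xs) = length xs - 1"
  by (simp add: merge_at_def)

lemma nth_merge_at: "Suc i < length xs \<Longrightarrow> k < length xs - 1 \<Longrightarrow>
  merge_at i xs ! k = (if k < i then xs!k else if k = i then xs!i * xs!(i+1) else xs!(k+1))"
  by (auto simp: merge_at_def nth_append min_def)

lemma drop1_merge_at: "Suc k < length xs \<Longrightarrow> 1 \<le> k \<Longrightarrow> drop 1 (merge_at k xs) = merge_at (k-1) (drop 1 xs)"
  by (rule nth_equalityI) (auto simp: nth_merge_at)

lemma drop1_merge_at': "Suc k < length xs \<Longrightarrow> 1 \<le> k \<Longrightarrow> drop (Suc 0) (merge_at k xs) = merge_at (k - Suc 0) (drop (Suc 0) xs)"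
  using drop1_merge_at by simp

lemma merge_at_merge_at: "Suc a < b \<Longrightarrow> Suc b < length xs \<Longrightarrow> merge_at a (merge_at b xs) = merge_at (b-1) (merge_at a xs)"
  by (rule nth_equalityI) (auto simp: nth_merge_at)

lemma merge_at_assoc:
  assumes "Suc (Suc i) < length xs" "xs!i \<in> carrier_mat 3 3" "xs!(Suc i) \<in> carrier_mat 3 3" "xs!(Suc (Suc i)) \<in> carrier_mat 3 3"
  shows "merge_at i (merge_at (Suc i) xs) = merge_at i (merge_at i (xs::'r::comm_ring_1 mat list))"
  using assms by (intro nth_equalityI) (auto simp: nth_merge_at assoc_mult_mat[of _ 3 3 _ 3 _ 3])

lemma take_merge_at: "length xs = Suc (Suc n) \<Longrightarrow> a < n \<Longrightarrow> take n (merge_at a xs) = merge_at a (take (Suc n) xs)"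
  by (rule nth_equalityI) (auto simp: nth_merge_at)

lemma tuples_merge_at: "xs \<in> tuples (S4::'r::comm_ring_1 mat set) (Suc n) \<Longrightarrow> i < n \<Longrightarrow> merge_at i xs \<in> tuples S4 n"
  unfolding tuples_def merge_at_def
  by (auto dest: in_set_takeD in_set_dropD intro!: S4_mult_closed nth_mem)

lemma merge_at_upd_lt: "i < a \<Longrightarrow> Suc a < length xs \<Longrightarrow> merge_at a (xs[i:=v]) = (merge_at a xs)[i:=v]"
  by (rule nth_equalityI) (auto simp: nth_merge_at nth_list_update)

lemma merge_at_upd_eq: "Suc a < length xs \<Longrightarrow> merge_at a (xs[a:=v]) = (merge_at a xs)[a := v * xs!(Suc a)]"
  by (rule nth_equalityI) (auto simp: nth_merge_at nth_list_update)

lemma merge_at_upd_suc: "Suc a < length xs \<Longrightarrow> merge_at a (xs[Suc a:=v]) = (merge_at a xs)[a := xs!a * v]"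
  by (rule nth_equalityI) (auto simp: nth_merge_at nth_list_update)

lemma merge_at_upd_gt: "Suc a < i \<Longrightarrow> i < length xs \<Longrightarrow> merge_at a (xs[i:=v]) = (merge_at a xs)[i - 1 := v]"
  by (rule nth_equalityI) (auto simp: nth_merge_at nth_list_update)

lemma drop1_upd0: "drop (Suc 0) (xs[0:=v]) = drop (Suc 0) xs"
  by (cases xs) auto

lemma drop1_upd: "0 < i \<Longrightarrow> drop (Suc 0) (xs[i:=v]) = (drop (Suc 0) xs)[i - 1 := v]"
  by (cases xs; cases i) auto

lemma take_upd_lt: "i < n \<Longrightarrow> take n (xs[i:=v]) = (take n xs)[i:=v]"
  by (rule take_update_swap)

lemma take_upd_ge: "n \<le> i \<Longrightarrow> take n (xs[i:=v]) = take n xs"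
  by (rule nth_equalityI) (auto simp: nth_list_update)

lemma merge_at_unit_eq:
  assumes "u!j = 1\<^sub>m 3" "1 \<le> j" "Suc j < length u" "u!(j-1) \<in> carrier_mat 3 3" "u!(Suc j) \<in> carrier_mat 3 3"
  shows "merge_at (j-1) u = merge_at j (u::'r::comm_ring_1 mat list)"
  using assms by (intro nth_equalityI) (auto simp: nth_merge_at right_mult_one_mat[of _ 3 3] left_mult_one_mat[of _ 3 3])

lemma merge_at0_unit:
  assumes "u!0 = 1\<^sub>m 3" "Suc 0 < length u" "u!1 \<in> carrier_mat 3 3"
  shows "merge_at 0 u = drop (Suc 0) (u::'r::comm_ring_1 mat list)"
  using assms by (intro nth_equalityI) (auto simp: nth_merge_at left_mult_one_mat[of _ 3 3])

lemma merge_at_last_unit: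
  assumes "length u = Suc m" "1 \<le> m" "u!m = 1\<^sub>m 3" "u!(m-1) \<in> carrier_mat 3 3"
  shows "merge_at (m-1) u = take m (u::'r::comm_ring_1 mat list)"
  using assms by (intro nth_equalityI) (auto simp: nth_merge_at right_mult_one_mat[of _ 3 3])

definition insert_at :: "nat \<Rightarrow> 'a \<Rightarrow> 'a list \<Rightarrow> 'a list" where "insert_at k v as = take k as @ v # drop k as"

lemma length_insert_at[simp]: "k \<le> length as \<Longrightarrow> length (insert_at k v as) = Suc (length as)"
  by (simp add: insert_at_def)

lemma nth_insert_at: "k \<le> length as \<Longrightarrow> p \<le> length as \<Longrightarrow> (insert_at k v as)!p = (if p < k then as!p else if p = k then v else as!(p-1))"
  by (auto simp: insert_at_def nth_append min_def)

lemma tuples_insert_at: "as \<in> tuples A m \<Longrightarrow> k \<le> m \<Longrightarrow> v \<in> A \<Longrightarrow> insert_at k v as \<in> tuples A (Suc m)"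
  unfolding tuples_def insert_at_def by (auto dest: in_set_takeD in_set_dropD)

lemma insert_at_update: "k \<le> length as \<Longrightarrow> i < length as \<Longrightarrow> insert_at k v (as[i:=w]) = (insert_at k v as)[(if i < k then i else Suc i) := w]"
  by (rule nth_equalityI) (auto simp: nth_insert_at nth_list_update)

lemma merge_at_insert_one_left: "1 \<le> k \<Longrightarrow> k \<le> length b \<Longrightarrow> b!(k-1) \<in> carrier_mat 3 3 \<Longrightarrow> merge_at (k-1) (insert_at k (1\<^sub>m 3) b) = (b::'r::comm_ring_1 mat list)"
  by (rule nth_equalityI) (auto simp: nth_merge_at nth_insert_at right_mult_one_mat[of _ 3 3])

lemma merge_at_insert_one_right: "k < length b \<Longrightarrow> b!k \<in> carrier_mat 3 3 \<Longrightarrow> merge_at k (insert_at k (1\<^sub>m 3) b) = (b::'r::comm_ring_1 mat list)"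
  by (rule nth_equalityI) (auto simp: nth_merge_at nth_insert_at left_mult_one_mat[of _ 3 3])

lemma merge_at_insert_at: "k < q \<Longrightarrow> q < length b \<Longrightarrow> merge_at q (insert_at k v b) = insert_at k v (merge_at (q-1) b)"
  by (rule nth_equalityI) (auto simp: nth_merge_at nth_insert_at)

lemma take_insert_at: "k \<le> m \<Longrightarrow> length b = Suc m \<Longrightarrow> take (Suc m) (insert_at k v b) = insert_at k v (take m b)"
  by (rule nth_equalityI) (auto simp: nth_insert_at)

lemma insert_at_0_drop: "as \<noteq> [] \<Longrightarrow> as!0 = v \<Longrightarrow> insert_at 0 v (drop 1 as) = as"
  by (cases as) (auto simp: insert_at_def)

lemma insert_at_merge_at: "1 \<le> k \<Longrightarrow> k < length a \<Longrightarrow> a!k = 1\<^sub>m 3 \<Longrightarrow> a!(k-1) \<in> carrier_mat 3 3 \<Longrightarrow>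
   insert_at k (1\<^sub>m 3) (merge_at (k-1) a) = (a::'r::comm_ring_1 mat list)"
  by (rule nth_equalityI) (auto simp: nth_merge_at nth_insert_at right_mult_one_mat[of _ 3 3])

section \<open>The Hochschild differential\<close>

definition face :: "nat \<Rightarrow> nat \<Rightarrow> ('r::comm_ring_1 mat list \<Rightarrow> 'r mat) \<Rightarrow> 'r mat list \<Rightarrow> 'r mat" where
  "face n i f xs = (if i = 0 then xs!0 * f (drop 1 xs) else if i \<le> n then f (merge_at (i-1) xs) else f (take n xs) * xs!n)"

lemma hdiff_face_sum: "p < 3 \<Longrightarrow> q < 3 \<Longrightarrow> hdiff n f xs $$ (p,q) = (\<Sum>i\<le>Suc n. (-1)^i * face n i f xs $$ (p,q))"
proof -
  assume pq: "p<3" "q<3"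
  have "(\<Sum>i\<le>Suc n. (-1)^i * face n i f xs $$ (p,q)) = face n 0 f xs $$ (p,q) + (\<Sum>i\<le>n. (-1)^(Suc i) * face n (Suc i) f xs $$ (p,q))"
    by (subst sum.atMost_Suc_shift) simp
  also have "(\<Sum>i\<le>n. (-1)^(Suc i) * face n (Suc i) f xs $$ (p,q)) = (\<Sum>i<n. (-1)^(Suc i) * face n (Suc i) f xs $$ (p,q)) + (-1)^(Suc n) * face n (Suc n) f xs $$ (p,q)"
    by (simp add: lessThan_Suc_atMost[symmetric])
  also have "(\<Sum>i<n. (-1)^(Suc i) * face n (Suc i) f xs $$ (p,q)) = (\<Sum>i<n. (-1)^(Suc i) * f (merge_at i xs) $$ (p,q))"
    by (rule sum.cong) (auto simp: face_def)
  finally show ?thesis using pq by (simp add: hdiff_def face_def merge_at_def)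
qed

lemma hdiff_carrier[simp]: "hdiff n f xs \<in> carrier_mat 3 3"
  by (simp add: hdiff_def)

lemma hdiff_dim[simp]: "dim_row (hdiff n f xs) = 3" "dim_col (hdiff n f xs) = 3"
  by (simp_all add: hdiff_def)

lemma qcoord_hdiff: "qcoord c (hdiff n f xs) = (\<Sum>i\<le>Suc n. (-1)^i * qcoord c (face n i f xs))"
  by (simp add: qcoord_def hdiff_face_sum sum_subtractf[symmetric] right_diff_distrib)

lemma face_carrier:
  assumes F: "\<forall>ys\<in>tuples S4 n. F ys \<in> carrier_mat 3 3" and xs: "xs \<in> tuples (S4::'r::comm_ring_1 mat set) (Suc n)"
  shows "face n i F xs \<in> carrier_mat 3 3"
  using F xs tuples_nth_carrier[OF xs] tuples_merge_at[OF xs, of "i-1"] tuples_drop1[OF xs] tuples_take[OF xs]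
  unfolding face_def by (auto intro!: mult_carrier_mat[of _ 3 3 _ 3])

lemma mult_left_index_sum:
  assumes "(x::'r::comm_ring_1 mat) \<in> carrier_mat 3 3" "H \<in> carrier_mat 3 3" "\<forall>i\<in>I. M i \<in> carrier_mat 3 3"
   "\<forall>k<3. H $$ (k,q) = (\<Sum>i\<in>I. s i * M i $$ (k,q))" "p<3" "q<3"
  shows "(x * H) $$ (p,q) = (\<Sum>i\<in>I. s i * (x * M i) $$ (p,q))"
proof -
  have "(x * H) $$ (p,q) = x$$(p,0)*H$$(0,q) + x$$(p,1)*H$$(1,q) + x$$(p,2)*H$$(2,q)"
    using assms by (simp only: index_mult_mat_3)
  also have "\<dots> = (\<Sum>i\<in>I. x$$(p,0)*(s i * M i$$(0,q)) + x$$(p,1)*(s i *M i$$(1,q)) + x$$(p,2)*(s i * M i$$(2,q)))"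
    using assms(4) by (simp add: sum_distrib_left sum.distrib)
  also have "\<dots> = (\<Sum>i\<in>I. s i * (x$$(p,0)*M i$$(0,q) + x$$(p,1)*M i$$(1,q) + x$$(p,2)*M i$$(2,q)))"
    by (rule sum.cong) (simp_all add: algebra_simps)
  also have "\<dots> = (\<Sum>i\<in>I. s i * (x * M i) $$ (p,q))"
    using assms by (intro sum.cong) (simp_all only: index_mult_mat_3)
  finally show ?thesis .
qed

lemma mult_right_index_sum:
  assumes "(x::'r::comm_ring_1 mat) \<in> carrier_mat 3 3" "H \<in> carrier_mat 3 3" "\<forall>i\<in>I. M i \<in> carrier_mat 3 3"
   "\<forall>k<3. H $$ (p,k) = (\<Sum>i\<in>I. s i * M i $$ (p,k))" "p<3" "q<3"
  shows "(H * x) $$ (p,q) = (\<Sum>i\<in>I. s i * (M i * x) $$ (p,q))"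
proof -
  have "(H * x) $$ (p,q) = H$$(p,0)*x$$(0,q) + H$$(p,1)*x$$(1,q) + H$$(p,2)*x$$(2,q)"
    using assms by (simp only: index_mult_mat_3)
  also have "\<dots> = (\<Sum>i\<in>I. (s i * M i$$(p,0))*x$$(0,q) + (s i * M i$$(p,1))*x$$(1,q) + (s i * M i$$(p,2))*x$$(2,q))"
    using assms(4) by (simp add: sum_distrib_right sum.distrib)
  also have "\<dots> = (\<Sum>i\<in>I. s i * (M i$$(p,0)*x$$(0,q) + M i$$(p,1)*x$$(1,q) + M i$$(p,2)*x$$(2,q)))"
    by (rule sum.cong) (simp_all add: algebra_simps)
  also have "\<dots> = (\<Sum>i\<in>I. s i * (M i * x) $$ (p,q))"
    using assms by (intro sum.cong) (simp_all only: index_mult_mat_3)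
  finally show ?thesis .
qed

lemma face_hdiff_sum:
  assumes F: "\<forall>ys\<in>tuples S4 n. F ys \<in> carrier_mat 3 3" and xs: "xs \<in> tuples (S4::'r::comm_ring_1 mat set) (Suc (Suc n))"
    and pq: "p < 3" "q < 3"
  shows "face (Suc n) j (hdiff n F) xs $$ (p,q) = (\<Sum>i\<le>Suc n. (-1)^i * face (Suc n) j (face n i F) xs $$ (p,q))"
proof -
  consider "j = 0" | "j \<noteq> 0" "j \<le> Suc n" | "\<not> j \<le> Suc n" by linarith
  then show ?thesis
  proof cases
    case 1
    have d: "drop 1 xs \<in> tuples S4 (Suc n)" using tuples_drop1[OF xs] .
    have "(xs!0 * hdiff n F (drop 1 xs)) $$ (p,q) = (\<Sum>i\<le>Suc n. (-1)^i * (xs!0 * face n i F (drop 1 xs)) $$ (p,q))"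
      by (rule mult_left_index_sum) (use tuples_nth_carrier[OF xs, of 0] face_carrier[OF F d] pq in \<open>auto simp: hdiff_face_sum\<close>)
    then show ?thesis using 1 by (simp add: face_def)
  next
    case 2
    then show ?thesis using pq by (simp add: face_def hdiff_face_sum)
  next
    case 3
    have t: "take (Suc n) xs \<in> tuples S4 (Suc n)" using tuples_take[OF xs] .
    have "(hdiff n F (take (Suc n) xs) * xs!(Suc n)) $$ (p,q) = (\<Sum>i\<le>Suc n. (-1)^i * (face n i F (take (Suc n) xs) * xs!(Suc n)) $$ (p,q))"
      by (rule mult_right_index_sum) (use tuples_nth_carrier[OF xs, of "Suc n"] face_carrier[OF F t] pq in \<open>auto simp: hdiff_face_sum\<close>)
    then show ?thesis using 3 by (simp add: face_def)
  qed
qed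

lemma face_face_first:
  assumes F: "\<forall>ys\<in>tuples S4 n. F ys \<in> carrier_mat 3 3" and xs: "xs \<in> tuples (S4::'r::comm_ring_1 mat set) (Suc (Suc n))"
    and j: "0 < j" "j \<le> Suc (Suc n)"
  shows "face (Suc n) j (face n 0 F) xs = face (Suc n) 0 (face n (j-1) F) xs"
proof -
  have len: "length xs = Suc (Suc n)" using tuples_len[OF xs] .
  have c: "\<And>k. k < Suc (Suc n) \<Longrightarrow> xs!k \<in> carrier_mat 3 3" using tuples_nth_carrier[OF xs] .
  have Fc: "\<And>ys. ys \<in> tuples S4 n \<Longrightarrow> F ys \<in> carrier_mat 3 3" using F by blast
  consider "j = 1" | "2 \<le> j" "j \<le> Suc n" | "j = Suc (Suc n)"
    using j by linarith
  then show ?thesis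
  proof cases
    case 1
    have t2: "drop 2 xs \<in> tuples S4 n" using tuples_drop1[OF tuples_drop1[OF xs]] by (simp add: numeral_2_eq_2)
    have "face (Suc n) j (face n 0 F) xs = (xs!0 * xs!1) * F (drop 2 xs)"
      using 1 len by (simp add: face_def merge_at_def numeral_2_eq_2)
    also have "\<dots> = xs!0 * (xs!1 * F (drop 2 xs))"
      by (rule assoc_mult_mat[OF c c Fc[OF t2]]) auto
    also have "\<dots> = face (Suc n) 0 (face n (j-1) F) xs"
      using 1 len by (simp add: face_def nth_drop numeral_2_eq_2)
    finally show ?thesis .
  next
    case 2
    have jn: "j - Suc 0 \<le> n" using 2 by linarith
    show ?thesis
      using 2 len jn by (simp add: face_def nth_merge_at drop1_merge_at')
  next
    case 3
    have t: "take n (drop 1 xs) \<in> tuples S4 n" using tuples_take[OF tuples_drop1[OF xs]] .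
    have "face (Suc n) j (face n 0 F) xs = (xs!0 * F (take n (drop 1 xs))) * xs!(Suc n)"
      using 3 len by (simp add: face_def drop_take)
    also have "\<dots> = xs!0 * (F (take n (drop 1 xs)) * xs!(Suc n))"
      by (rule assoc_mult_mat[OF c Fc[OF t] c]) auto
    also have "\<dots> = face (Suc n) 0 (face n (j-1) F) xs"
      using 3 len by (simp add: face_def)
    finally show ?thesis .
  qed
qed

lemma face_face_pos:
  assumes F: "\<forall>ys\<in>tuples S4 n. F ys \<in> carrier_mat 3 3" and xs: "xs \<in> tuples (S4::'r::comm_ring_1 mat set) (Suc (Suc n))"
    and ij: "0 < i" "i < j" "j \<le> Suc (Suc n)"
  shows "face (Suc n) j (face n i F) xs = face (Suc n) i (face n (j-1) F) xs"
proof -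
  have len: "length xs = Suc (Suc n)" using tuples_len[OF xs] .
  have c: "\<And>k. k < Suc (Suc n) \<Longrightarrow> xs!k \<in> carrier_mat 3 3" using tuples_nth_carrier[OF xs] .
  have Fc: "\<And>ys. ys \<in> tuples S4 n \<Longrightarrow> F ys \<in> carrier_mat 3 3" using F by blast
  consider "1 \<le> i" "j = Suc i" "j \<le> Suc n" | "1 \<le> i" "Suc (Suc i) \<le> j" "j \<le> Suc n"
    | "1 \<le> i" "i \<le> n" "j = Suc (Suc n)" | "i = Suc n" "j = Suc (Suc n)"
    using ij by linarith
  then show ?thesis
  proof cases
    case 1
    have "merge_at (i-1) (merge_at (Suc (i-1)) xs) = merge_at (i-1) (merge_at (i-1) xs)"
      by (rule merge_at_assoc) (use 1 len c in auto)
    then show ?thesis using 1 len by (simp add: face_def)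
  next
    case 2
    have "merge_at (i-1) (merge_at (j-1) xs) = merge_at (j-1-1) (merge_at (i-1) xs)"
      by (rule merge_at_merge_at) (use 2 len in auto)
    moreover have jn: "j - Suc 0 \<le> n" using 2 by linarith
    ultimately show ?thesis using 2 len by (simp add: face_def)
  next
    case 3
    have "take n (merge_at (i-1) xs) = merge_at (i-1) (take (Suc n) xs)"
      by (rule take_merge_at) (use 3 len in auto)
    moreover have "i - Suc 0 < n" using 3 by linarith
    then have "merge_at (i-1) xs ! n = xs ! Suc n" using 3 len by (simp add: nth_merge_at)
    ultimately show ?thesis using 3 len by (simp add: face_def)
  next
    case 4
    have t: "take n xs \<in> tuples S4 n" using tuples_take[OF tuples_take[OF xs]] by (simp add: min_def)
    have "face (Suc n) j (face n i F) xs = (F (take n xs) * xs!n) * xs!(Suc n)"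
      using 4 len by (simp add: face_def min_def)
    also have "\<dots> = F (take n xs) * (xs!n * xs!(Suc n))"
      by (rule assoc_mult_mat[OF Fc[OF t] c c]) auto
    also have "\<dots> = face (Suc n) i (face n (j-1) F) xs"
      using 4 len by (simp add: face_def merge_at_def nth_append)
    finally show ?thesis .
  qed
qed

lemma face_face:
  assumes F: "\<forall>ys\<in>tuples S4 n. F ys \<in> carrier_mat 3 3" and xs: "xs \<in> tuples (S4::'r::comm_ring_1 mat set) (Suc (Suc n))"
    and ij: "i < j" "j \<le> Suc (Suc n)"
  shows "face (Suc n) j (face n i F) xs = face (Suc n) i (face n (j-1) F) xs"
proof (cases "i = 0")
  case True
  then show ?thesis using face_face_first[OF F xs _ ij(2)] ij(1) by simp
next
  case False
  then show ?thesis using face_face_pos[OF F xs _ ij] by simp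
qed

lemma hdiff_hdiff:
  assumes F: "\<forall>ys\<in>tuples S4 n. F ys \<in> carrier_mat 3 3" and xs: "xs \<in> tuples (S4::'r::comm_ring_1 mat set) (Suc (Suc n))"
  shows "hdiff (Suc n) (hdiff n F) xs = 0\<^sub>m 3 3"
proof (rule eq_matI)
  fix p q assume "p < dim_row (0\<^sub>m 3 3 :: 'r mat)" "q < dim_col (0\<^sub>m 3 3 :: 'r mat)"
  then have pq: "p < 3" "q < 3" by auto
  have "hdiff (Suc n) (hdiff n F) xs $$ (p,q) = (\<Sum>j\<le>Suc (Suc n). (-1)^j * (\<Sum>i\<le>Suc n. (-1)^i * face (Suc n) j (face n i F) xs $$ (p,q)))"
    using pq by (simp add: hdiff_face_sum face_hdiff_sum[OF F xs])
  also have "\<dots> = (\<Sum>j\<le>Suc (Suc n). \<Sum>i\<le>Suc n. (-1)^(j+i) * face (Suc n) j (face n i F) xs $$ (p,q))"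
    by (simp only: sum_distrib_left power_add mult.assoc)
  also have "\<dots> = 0"
    by (rule alternating_double_sum_eq_0) (simp add: face_face[OF F xs])
  finally show "hdiff (Suc n) (hdiff n F) xs $$ (p,q) = 0\<^sub>m 3 3 $$ (p,q)" using pq by simp
qed auto

section \<open>Cochains modulo S4\<close>

definition coord_multilinear :: "nat \<Rightarrow> ('r::comm_ring_1 mat list \<Rightarrow> nat \<Rightarrow> 'r) \<Rightarrow> bool" where
  "coord_multilinear n \<Phi> \<longleftrightarrow> (\<forall>xs\<in>tuples S4 n. \<forall>i<n. \<forall>x\<in>S4. \<forall>y\<in>S4. \<forall>r s c. c < 6 \<longrightarrow>
      \<Phi> (xs[i := r \<cdot>\<^sub>m x + s \<cdot>\<^sub>m y]) c = r * \<Phi> (xs[i:=x]) c + s * \<Phi> (xs[i:=y]) c)"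

lemma cochain_S4_iff:
  "cochain (S4::'r::comm_ring_1 mat set) n f \<longleftrightarrow> (\<forall>xs\<in>tuples S4 n. f xs \<in> carrier_mat 3 3) \<and> coord_multilinear n (\<lambda>xs c. qcoord c (f xs))"
proof -
  have key: "f (xs[i := r \<cdot>\<^sub>m x + s \<cdot>\<^sub>m y]) - (r \<cdot>\<^sub>m f (xs[i := x]) + s \<cdot>\<^sub>m f (xs[i := y])) \<in> S4
     \<longleftrightarrow> (\<forall>c<6. qcoord c (f (xs[i := r \<cdot>\<^sub>m x + s \<cdot>\<^sub>m y])) = r * qcoord c (f (xs[i:=x])) + s * qcoord c (f (xs[i:=y])))"
    if C: "\<forall>xs\<in>tuples S4 n. f xs \<in> carrier_mat 3 3" and xs: "xs \<in> tuples S4 n" and xy: "x \<in> S4" "y \<in> S4" for xs i x y r s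
  proof -
    have c1: "f (xs[i := r \<cdot>\<^sub>m x + s \<cdot>\<^sub>m y]) \<in> carrier_mat 3 3" using C tuples_update[OF xs S4_lincomb_closed[OF xy]] by blast
    have c2: "f (xs[i := x]) \<in> carrier_mat 3 3" using C tuples_update[OF xs xy(1)] by blast
    have c3: "f (xs[i := y]) \<in> carrier_mat 3 3" using C tuples_update[OF xs xy(2)] by blast
    show ?thesis using c1 c2 c3
      by (subst S4_iff_qcoord) (auto simp: qcoord_minus qcoord_add qcoord_smult)
  qed
  show ?thesis
    unfolding cochain_def coord_multilinear_def M3_def using key by (auto 0 0)
qed

lemma coord_multilinear_cong: "coord_multilinear n \<Phi> \<Longrightarrow> (\<And>xs c. xs \<in> tuples S4 n \<Longrightarrow> c < 6 \<Longrightarrow> \<Psi> xs c = \<Phi> xs c) \<Longrightarrow> coord_multilinear n \<Psi>"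
  unfolding coord_multilinear_def by (simp add: tuples_update S4_lincomb_closed)

lemma coord_multilinear_add: "coord_multilinear n \<Phi> \<Longrightarrow> coord_multilinear n \<Psi> \<Longrightarrow> coord_multilinear n (\<lambda>xs c. \<Phi> xs c + t * \<Psi> xs c)"
  unfolding coord_multilinear_def by (simp add: algebra_simps)

lemma coord_multilinear_sum: "finite I \<Longrightarrow> (\<And>j. j \<in> I \<Longrightarrow> coord_multilinear n (\<Phi> j)) \<Longrightarrow> coord_multilinear n (\<lambda>xs c. \<Sum>j\<in>I. a j * \<Phi> j xs c)"
proof (induction I rule: finite_induct)
  case empty
  then show ?case by (simp add: coord_multilinear_def)
next
  case (insert x F)
  have "coord_multilinear n (\<lambda>xs c. (\<Sum>j\<in>F. a j * \<Phi> j xs c) + a x * \<Phi> x xs c)"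
    using insert by (intro coord_multilinear_add) auto
  then show ?case using insert by (simp add: add.commute)
qed

lemma coord_multilinear_update_basis:
  fixes \<Phi> :: "'r::comm_ring_1 mat list \<Rightarrow> nat \<Rightarrow> 'r"
  assumes L: "coord_multilinear n \<Phi>" and xs: "xs \<in> tuples S4 n" and k: "k < n" and c: "c < 6"
    and B: "\<And>v. v \<in> S4_basis \<Longrightarrow> \<Phi> (xs[k:=v]) c = 0"
  shows "\<Phi> xs c = 0"
proof -
  define a where "a = xs!k"
  have a: "a \<in> S4" using tuples_nth[OF xs k] a_def by simp
  define y where "y = (a$$(0,1)) \<cdot>\<^sub>m gen_b + (a$$(0,2)) \<cdot>\<^sub>m (gen_c::'r mat)"
  have y: "y \<in> S4" unfolding y_def by (intro S4_lincomb_closed) auto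
  have "\<Phi> (xs[k:=y]) c = a$$(0,1) * \<Phi> (xs[k:=gen_b]) c + a$$(0,2) * \<Phi> (xs[k:=gen_c]) c"
    using L xs k c unfolding coord_multilinear_def y_def by auto
  also have "\<dots> = 0" using B by (simp add: S4_basis_def)
  finally have y0: "\<Phi> (xs[k:=y]) c = 0" .
  have "\<Phi> xs c = \<Phi> (xs[k := (a$$(0,0)) \<cdot>\<^sub>m 1\<^sub>m 3 + 1 \<cdot>\<^sub>m y]) c"
    using S4_decomp[OF a] a_def y_def by simp
  also have "\<dots> = a$$(0,0) * \<Phi> (xs[k:=1\<^sub>m 3]) c + 1 * \<Phi> (xs[k:=y]) c"
    using L xs k c y S4_one unfolding coord_multilinear_def by blast
  also have "\<dots> = 0" using B y0 by (simp add: S4_basis_def)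
  finally show ?thesis .
qed

lemma coord_multilinear_basis:
  fixes \<Phi> :: "'r::comm_ring_1 mat list \<Rightarrow> nat \<Rightarrow> 'r" and xs :: "'r mat list"
  assumes L: "coord_multilinear n \<Phi>"
    and H: "\<And>xs c. xs \<in> tuples S4 n \<Longrightarrow> set xs \<subseteq> S4_basis \<Longrightarrow> c < 6 \<Longrightarrow> \<Phi> xs c = 0"
  shows "xs \<in> tuples S4 n \<Longrightarrow> c < 6 \<Longrightarrow> \<Phi> xs c = 0"
proof -
  have P: "\<forall>xs\<in>tuples S4 n. (\<forall>i. k \<le> i \<longrightarrow> i < n \<longrightarrow> xs!i \<in> S4_basis) \<longrightarrow> (\<forall>c<6. \<Phi> xs c = 0)" for k
  proof (induction k)
    case 0
    show ?case
    proof (intro ballI impI allI)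
      fix xs :: "'r mat list" and c :: nat
      assume xs: "xs \<in> tuples S4 n" and "\<forall>i. 0 \<le> i \<longrightarrow> i < n \<longrightarrow> xs ! i \<in> S4_basis" and c: "c < 6"
      then have "set xs \<subseteq> S4_basis" using tuples_len[OF xs] by (auto simp: in_set_conv_nth)
      then show "\<Phi> xs c = 0" using H xs c by blast
    qed
  next
    case (Suc k)
    show ?case
    proof (intro ballI impI allI)
      fix xs :: "'r mat list" and c :: nat
      assume xs: "xs \<in> tuples S4 n" and B: "\<forall>i. Suc k \<le> i \<longrightarrow> i < n \<longrightarrow> xs ! i \<in> S4_basis" and c: "c < 6"
      show "\<Phi> xs c = 0"
      proof (cases "k < n")
        case False
        then show ?thesis using Suc.IH xs B c by auto
      next
        case True
        show ?thesis
        proof (rule coord_multilinear_update_basis[OF L xs True c])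
          fix v :: "'r mat" assume v: "v \<in> S4_basis"
          have "xs[k:=v] \<in> tuples S4 n" using tuples_update[OF xs] v S4_basis_subset by auto
          moreover have "\<forall>i. k \<le> i \<longrightarrow> i < n \<longrightarrow> xs[k:=v] ! i \<in> S4_basis"
            using B v tuples_len[OF xs] by (auto simp: nth_list_update)
          ultimately show "\<Phi> (xs[k:=v]) c = 0" using Suc.IH c by blast
        qed
      qed
    qed
  qed
  show "xs \<in> tuples S4 n \<Longrightarrow> c < 6 \<Longrightarrow> \<Phi> xs c = 0" using P[of n] by auto
qed

lemma cochain_carrier: "cochain S4 n f \<Longrightarrow> xs \<in> tuples S4 n \<Longrightarrow> f xs \<in> carrier_mat 3 (3::nat)"
  by (simp add: cochain_S4_iff)

lemma qcoord_cochain_lincomb: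
  "cochain S4 n f \<Longrightarrow> xs \<in> tuples S4 n \<Longrightarrow> i < n \<Longrightarrow> x \<in> S4 \<Longrightarrow> y \<in> S4 \<Longrightarrow> c < 6 \<Longrightarrow>
   qcoord c (f (xs[i := r \<cdot>\<^sub>m x + s \<cdot>\<^sub>m y])) = r * qcoord c (f (xs[i := x])) + s * qcoord c (f (xs[i := (y::'r::comm_ring_1 mat)]))"
  unfolding cochain_S4_iff coord_multilinear_def by blast

lemma cochain_zero_entry:
  assumes g: "cochain (S4::'r::comm_ring_1 mat set) m g" and ys: "ys \<in> tuples S4 m" and i: "i < m" "ys!i = 0\<^sub>m 3 3" and c: "c < 6"
  shows "qcoord c (g ys) = 0"
proof -
  have gl: "coord_multilinear m (\<lambda>xs c. qcoord c (g xs))" using g by (simp add: cochain_S4_iff)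
  have "qcoord c (g (ys[i := 0 \<cdot>\<^sub>m 0\<^sub>m 3 3 + 0 \<cdot>\<^sub>m 0\<^sub>m 3 3])) = 0 * qcoord c (g (ys[i:=0\<^sub>m 3 3])) + 0 * qcoord c (g (ys[i:=0\<^sub>m 3 3]))"
    using gl ys i c S4_zero unfolding coord_multilinear_def by blast
  moreover have "ys[i := 0 \<cdot>\<^sub>m 0\<^sub>m 3 3 + 0 \<cdot>\<^sub>m 0\<^sub>m 3 3] = ys" using i list_update_id[of ys i] by simp
  ultimately show ?thesis by simp
qed

lemma cochain_zero: "cochain (S4::'r::comm_ring_1 mat set) n (\<lambda>_. 0\<^sub>m 3 3)"
  unfolding cochain_S4_iff coord_multilinear_def by simp

lemma qcoord_first_face_lincomb:
  fixes x y :: "'r::comm_ring_1 mat"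
  assumes f: "cochain S4 n f" and xs: "xs \<in> tuples S4 (Suc n)" and i: "i < Suc n"
    and x: "x \<in> S4" and y: "y \<in> S4" and c: "c < 6"
  shows "qcoord c (face n 0 f (xs[i := r \<cdot>\<^sub>m x + s \<cdot>\<^sub>m y]))
           = r * qcoord c (face n 0 f (xs[i := x])) + s * qcoord c (face n 0 f (xs[i := y]))"
proof (cases "i = 0")
  case True
  have F: "f (drop (Suc 0) xs) \<in> carrier_mat 3 3" using cochain_carrier[OF f tuples_drop1[OF xs]] by simp
  have e: "face n 0 f (xs[i:=v]) = v * f (drop (Suc 0) xs)" for v
    using True tuples_len[OF xs] by (simp add: face_def drop1_upd0)
  show ?thesis unfolding e using c F S4_carrier[OF x] S4_carrier[OF y]
    by (simp add: qcoord_mult_left[OF S4_lincomb_closed[OF x y] F c] qcoord_mult_left[OF x F c]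
                  qcoord_mult_left[OF y F c] lcoord_lincomb_mat)
next
  case False
  define ys where "ys = drop (Suc 0) xs"
  have ys: "ys \<in> tuples S4 n" using tuples_drop1[OF xs] ys_def by simp
  define p where "p = i - 1"
  have p: "p < n" using False i p_def by linarith
  have e: "face n 0 f (xs[i:=v]) = xs!0 * f (ys[p := v])" for v
    using False by (simp add: face_def drop1_upd ys_def p_def)
  have x0: "xs!0 \<in> S4" using tuples_nth[OF xs] by simp
  have F: "f (ys[p := v]) \<in> carrier_mat 3 3" if "v \<in> S4" for v
    using cochain_carrier[OF f tuples_update[OF ys that]] .
  have "qcoord c (xs!0 * f (ys[p := r \<cdot>\<^sub>m x + s \<cdot>\<^sub>m y]))
      = lcoord (xs!0) c (\<lambda>d. qcoord d (f (ys[p := r \<cdot>\<^sub>m x + s \<cdot>\<^sub>m y])))"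
    by (rule qcoord_mult_left[OF x0 F[OF S4_lincomb_closed[OF x y]] c])
  also have "\<dots> = lcoord (xs!0) c (\<lambda>d. r * qcoord d (f (ys[p := x])) + s * qcoord d (f (ys[p := y])))"
    by (rule lcoord_cong[OF _ c]) (rule qcoord_cochain_lincomb[OF f ys p x y])
  also have "\<dots> = r * qcoord c (xs!0 * f (ys[p := x])) + s * qcoord c (xs!0 * f (ys[p := y]))"
    by (simp add: lcoord_lincomb qcoord_mult_left[OF x0 F[OF x] c] qcoord_mult_left[OF x0 F[OF y] c])
  finally show ?thesis unfolding e .
qed

lemma qcoord_inner_face_lincomb:
  fixes x y :: "'r::comm_ring_1 mat"
  assumes f: "cochain S4 n f" and xs: "xs \<in> tuples S4 (Suc n)" and i: "i < Suc n"
    and x: "x \<in> S4" and y: "y \<in> S4" and c: "c < 6" and j: "0 < j" "j \<le> n"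
  shows "qcoord c (face n j f (xs[i := r \<cdot>\<^sub>m x + s \<cdot>\<^sub>m y]))
           = r * qcoord c (face n j f (xs[i := x])) + s * qcoord c (face n j f (xs[i := y]))"
proof -
  define a where "a = j - 1"
  have a: "a < n" "Suc a < length xs" using j tuples_len[OF xs] a_def by auto
  define ms where "ms = merge_at a xs"
  have ms: "ms \<in> tuples S4 n" using tuples_merge_at[OF xs a(1)] ms_def by simp
  have e: "face n j f (xs[i:=v]) = f (merge_at a (xs[i:=v]))" for v
    using j by (simp add: face_def a_def)
  have nth: "xs!k \<in> S4" if "k < Suc n" for k using tuples_nth[OF xs that] .
  have xc: "x \<in> carrier_mat 3 3" "y \<in> carrier_mat 3 3" using x y S4_carrier by auto
  consider "i < a" | "i = a" | "i = Suc a" | "Suc a < i" by linarith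
  then show ?thesis
  proof cases
    case 1
    then show ?thesis unfolding e using qcoord_cochain_lincomb[OF f ms _ x y c] a
      by (simp add: merge_at_upd_lt ms_def)
  next
    case 2
    have z: "xs!(Suc a) \<in> S4" using nth a by auto
    have "merge_at a (xs[i := r \<cdot>\<^sub>m x + s \<cdot>\<^sub>m y]) = ms[a := r \<cdot>\<^sub>m (x * xs!(Suc a)) + s \<cdot>\<^sub>m (y * xs!(Suc a))]"
      using 2 a xc S4_carrier[OF z] by (simp add: merge_at_upd_eq ms_def mat_lin_right)
    then show ?thesis
      unfolding e using qcoord_cochain_lincomb[OF f ms a(1) S4_mult_closed[OF x z] S4_mult_closed[OF y z] c] 2 a
      by (simp add: merge_at_upd_eq ms_def)
  next
    case 3
    have z: "xs!a \<in> S4" using nth a by auto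
    have "merge_at a (xs[i := r \<cdot>\<^sub>m x + s \<cdot>\<^sub>m y]) = ms[a := r \<cdot>\<^sub>m (xs!a * x) + s \<cdot>\<^sub>m (xs!a * y)]"
      using 3 a xc S4_carrier[OF z] by (simp add: merge_at_upd_suc ms_def mat_lin_left)
    then show ?thesis
      unfolding e using qcoord_cochain_lincomb[OF f ms a(1) S4_mult_closed[OF z x] S4_mult_closed[OF z y] c] 3 a
      by (simp add: merge_at_upd_suc ms_def)
  next
    case 4
    then have "i - 1 < n" using i by linarith
    then show ?thesis unfolding e using qcoord_cochain_lincomb[OF f ms _ x y c] a 4 i tuples_len[OF xs]
      by (simp add: merge_at_upd_gt ms_def)
  qed
qed

lemma qcoord_last_face_lincomb:
  fixes x y :: "'r::comm_ring_1 mat"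
  assumes f: "cochain S4 n f" and xs: "xs \<in> tuples S4 (Suc n)" and i: "i < Suc n"
    and x: "x \<in> S4" and y: "y \<in> S4" and c: "c < 6"
  shows "qcoord c (face n (Suc n) f (xs[i := r \<cdot>\<^sub>m x + s \<cdot>\<^sub>m y]))
           = r * qcoord c (face n (Suc n) f (xs[i := x])) + s * qcoord c (face n (Suc n) f (xs[i := y]))"
proof (cases "i < n")
  case True
  define ys where "ys = take n xs"
  have ys: "ys \<in> tuples S4 n" using tuples_take[OF xs] ys_def by simp
  have e: "face n (Suc n) f (xs[i:=v]) = f (ys[i:=v]) * xs!n" for v
    using True tuples_len[OF xs] by (simp add: face_def take_upd_lt ys_def)
  have xn: "xs!n \<in> S4" using tuples_nth[OF xs] by simp
  have F: "f (ys[i := v]) \<in> carrier_mat 3 3" if "v \<in> S4" for v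
    using cochain_carrier[OF f tuples_update[OF ys that]] .
  have "qcoord c (f (ys[i := r \<cdot>\<^sub>m x + s \<cdot>\<^sub>m y]) * xs!n)
      = rcoord (xs!n) c (\<lambda>d. qcoord d (f (ys[i := r \<cdot>\<^sub>m x + s \<cdot>\<^sub>m y])))"
    by (rule qcoord_mult_right[OF xn F[OF S4_lincomb_closed[OF x y]] c])
  also have "\<dots> = rcoord (xs!n) c (\<lambda>d. r * qcoord d (f (ys[i := x])) + s * qcoord d (f (ys[i := y])))"
    by (rule rcoord_cong[OF _ c]) (rule qcoord_cochain_lincomb[OF f ys True x y])
  also have "\<dots> = r * qcoord c (f (ys[i := x]) * xs!n) + s * qcoord c (f (ys[i := y]) * xs!n)"
    by (simp add: rcoord_lincomb qcoord_mult_right[OF xn F[OF x] c] qcoord_mult_right[OF xn F[OF y] c])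
  finally show ?thesis unfolding e .
next
  case False
  have F: "f (take n xs) \<in> carrier_mat 3 3" using cochain_carrier[OF f tuples_take[OF xs]] .
  have e: "face n (Suc n) f (xs[i:=v]) = f (take n xs) * v" for v
  proof -
    have "i = n" using False i by simp
    then show ?thesis using tuples_len[OF xs] by (simp add: face_def take_upd_ge)
  qed
  show ?thesis unfolding e using c F S4_carrier[OF x] S4_carrier[OF y]
    by (simp add: qcoord_mult_right[OF S4_lincomb_closed[OF x y] F c] qcoord_mult_right[OF x F c]
                  qcoord_mult_right[OF y F c] rcoord_lincomb_mat)
qed

lemma face_coord_multilinear:
  assumes f: "cochain (S4::'r::comm_ring_1 mat set) n f"
  shows "coord_multilinear (Suc n) (\<lambda>xs c. qcoord c (face n j f xs))"
  unfolding coord_multilinear_def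
proof (intro ballI allI impI)
  fix xs :: "'r mat list" and i :: nat and x y :: "'r mat" and r s :: 'r and c :: nat
  assume xs: "xs \<in> tuples S4 (Suc n)" and i: "i < Suc n" and x: "x \<in> S4" and y: "y \<in> S4" and c: "c < 6"
  consider "j = 0" | "0 < j" "j \<le> n" | "n < j" by linarith
  then show "qcoord c (face n j f (xs[i := r \<cdot>\<^sub>m x + s \<cdot>\<^sub>m y]))
               = r * qcoord c (face n j f (xs[i := x])) + s * qcoord c (face n j f (xs[i := y]))"
  proof cases
    case 1
    then show ?thesis using qcoord_first_face_lincomb[OF f xs i x y c] by simp
  next
    case 2
    then show ?thesis by (rule qcoord_inner_face_lincomb[OF f xs i x y c])
  next
    case 3
    then have "face n j f = face n (Suc n) f" by (auto simp: face_def fun_eq_iff)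
    then show ?thesis using qcoord_last_face_lincomb[OF f xs i x y c] by simp
  qed
qed

lemma hdiff_cochain:
  assumes f: "cochain (S4::'r::comm_ring_1 mat set) n f"
  shows "cochain S4 (Suc n) (hdiff n f)"
  unfolding cochain_S4_iff
proof
  show "\<forall>xs\<in>tuples S4 (Suc n). hdiff n f xs \<in> carrier_mat 3 3" by simp
  have "coord_multilinear (Suc n) (\<lambda>xs c. \<Sum>j\<in>{..Suc n}. (-1)^j * qcoord c (face n j f xs))"
    by (rule coord_multilinear_sum) (auto intro: face_coord_multilinear[OF f])
  then show "coord_multilinear (Suc n) (\<lambda>xs c. qcoord c (hdiff n f xs))"
    by (rule coord_multilinear_cong) (simp add: qcoord_hdiff)
qed

lemma coord_multilinear_hdiff: "cochain (S4::'r::comm_ring_1 mat set) n f \<Longrightarrow> coord_multilinear (Suc n) (\<lambda>xs c. qcoord c (hdiff n f xs))"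
  using hdiff_cochain by (simp add: cochain_S4_iff)

lemma cochain_add_smult:
  assumes f: "cochain (S4::'r::comm_ring_1 mat set) n f" and g: "cochain S4 n g"
  shows "cochain S4 n (\<lambda>xs. f xs + t \<cdot>\<^sub>m g xs)"
proof -
  have fc: "\<forall>xs\<in>tuples S4 n. f xs \<in> carrier_mat 3 3" and fl: "coord_multilinear n (\<lambda>xs c. qcoord c (f xs))"
    and gc: "\<forall>xs\<in>tuples S4 n. g xs \<in> carrier_mat 3 3" and gl: "coord_multilinear n (\<lambda>xs c. qcoord c (g xs))"
    using f g by (auto simp: cochain_S4_iff)
  have "coord_multilinear n (\<lambda>xs c. qcoord c (f xs) + t * qcoord c (g xs))" by (rule coord_multilinear_add[OF fl gl])
  then have "coord_multilinear n (\<lambda>xs c. qcoord c (f xs + t \<cdot>\<^sub>m g xs))"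
    by (rule coord_multilinear_cong) (use fc gc in \<open>simp add: qcoord_add qcoord_smult\<close>)
  then show ?thesis unfolding cochain_S4_iff using fc gc by auto
qed

lemma qcoord_face_add_smult:
  assumes fc: "\<forall>ys\<in>tuples S4 n. f ys \<in> carrier_mat 3 3" and gc: "\<forall>ys\<in>tuples S4 n. g ys \<in> carrier_mat 3 3"
    and xs: "xs \<in> tuples (S4::'r::comm_ring_1 mat set) (Suc n)" and c: "c < 6"
  shows "qcoord c (face n j (\<lambda>ys. f ys + t \<cdot>\<^sub>m g ys) xs) = qcoord c (face n j f xs) + t * qcoord c (face n j g xs)"
proof -
  consider "j = 0" | "j \<noteq> 0" "j \<le> n" | "\<not> j \<le> n" "j \<noteq> 0" by linarith
  then show ?thesis
  proof cases
    case 1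
    have d: "drop 1 xs \<in> tuples S4 n" using tuples_drop1[OF xs] .
    have F: "f (drop 1 xs) \<in> carrier_mat 3 3" "g (drop 1 xs) \<in> carrier_mat 3 3" using fc gc d by auto
    have x0: "xs!0 \<in> S4" using tuples_nth[OF xs] by simp
    have "qcoord c (xs!0 * (f (drop 1 xs) + t \<cdot>\<^sub>m g (drop 1 xs))) = lcoord (xs!0) c (\<lambda>d. qcoord d (f (drop 1 xs) + t \<cdot>\<^sub>m g (drop 1 xs)))"
      by (rule qcoord_mult_left[OF x0 _ c]) (use F in simp)
    also have "\<dots> = lcoord (xs!0) c (\<lambda>d. 1 * qcoord d (f (drop 1 xs)) + t * qcoord d (g (drop 1 xs)))"
      using F by (simp add: qcoord_add qcoord_smult)
    also have "\<dots> = qcoord c (xs!0 * f (drop 1 xs)) + t * qcoord c (xs!0 * g (drop 1 xs))"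
      by (simp only: lcoord_lincomb qcoord_mult_left[OF x0 F(1) c] qcoord_mult_left[OF x0 F(2) c]) simp
    finally show ?thesis using 1 by (simp add: face_def)
  next
    case 2
    have "merge_at (j-1) xs \<in> tuples S4 n" using tuples_merge_at[OF xs] 2 by simp
    then show ?thesis using 2 fc gc by (simp add: face_def qcoord_add qcoord_smult)
  next
    case 3
    have d: "take n xs \<in> tuples S4 n" using tuples_take[OF xs] .
    have F: "f (take n xs) \<in> carrier_mat 3 3" "g (take n xs) \<in> carrier_mat 3 3" using fc gc d by auto
    have xn: "xs!n \<in> S4" using tuples_nth[OF xs] by simp
    have "qcoord c ((f (take n xs) + t \<cdot>\<^sub>m g (take n xs)) * xs!n) = rcoord (xs!n) c (\<lambda>d. qcoord d (f (take n xs) + t \<cdot>\<^sub>m g (take n xs)))"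
      by (rule qcoord_mult_right[OF xn _ c]) (use F in simp)
    also have "\<dots> = rcoord (xs!n) c (\<lambda>d. 1 * qcoord d (f (take n xs)) + t * qcoord d (g (take n xs)))"
      using F by (simp add: qcoord_add qcoord_smult)
    also have "\<dots> = qcoord c (f (take n xs) * xs!n) + t * qcoord c (g (take n xs) * xs!n)"
      by (simp only: rcoord_lincomb qcoord_mult_right[OF xn F(1) c] qcoord_mult_right[OF xn F(2) c]) simp
    finally show ?thesis using 3 by (simp add: face_def)
  qed
qed

lemma qcoord_hdiff_add_smult:
  assumes fc: "\<forall>ys\<in>tuples S4 n. f ys \<in> carrier_mat 3 3" and gc: "\<forall>ys\<in>tuples S4 n. g ys \<in> carrier_mat 3 3"
    and xs: "xs \<in> tuples (S4::'r::comm_ring_1 mat set) (Suc n)" and c: "c < 6"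
  shows "qcoord c (hdiff n (\<lambda>ys. f ys + t \<cdot>\<^sub>m g ys) xs) = qcoord c (hdiff n f xs) + t * qcoord c (hdiff n g xs)"
  by (simp add: qcoord_hdiff qcoord_face_add_smult[OF fc gc xs c] sum.distrib sum_distrib_left algebra_simps)

lemma qcoord_hdiff_zero:
  assumes xs: "xs \<in> tuples (S4::'r::comm_ring_1 mat set) (Suc m)" and c: "c < 6"
  shows "qcoord c (hdiff m (\<lambda>_. 0\<^sub>m 3 3) xs) = 0"
proof -
  have "qcoord c (face m i (\<lambda>_. 0\<^sub>m 3 3) xs) = 0" for i
  proof -
    have x0: "xs!0 \<in> S4" "xs!m \<in> S4" using tuples_nth[OF xs] by auto
    show ?thesis using qcoord_mult_left_zero[OF x0(1) _ c, of "0\<^sub>m 3 3"] qcoord_mult_right_zero[OF x0(2) _ c, of "0\<^sub>m 3 3"]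
      by (simp add: face_def)
  qed
  then show ?thesis by (simp add: qcoord_hdiff)
qed

lemma qcoord_lincomb: "c < 6 \<Longrightarrow> qcoord c (lincomb K r cc xs) = (\<Sum>l<K. r l * qcoord c (cc l xs))"
  by (auto simp: qcoord_def lincomb_def sum_subtractf[symmetric] right_diff_distrib dest!: less_6_cases)

lemma lincomb_carrier[simp]: "lincomb K r cc xs \<in> carrier_mat 3 3"
  by (simp add: lincomb_def)

lemma lincomb_cochain:
  assumes "\<And>l. l < K \<Longrightarrow> cochain (S4::'r::comm_ring_1 mat set) n (cc l)"
  shows "cochain S4 n (lincomb K r cc)"
  unfolding cochain_S4_iff
proof
  show "\<forall>xs\<in>tuples S4 n. lincomb K r cc xs \<in> carrier_mat 3 3" by simp
  have "coord_multilinear n (\<lambda>xs c. \<Sum>l\<in>{..<K}. r l * qcoord c (cc l xs))"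
    by (rule coord_multilinear_sum) (use assms in \<open>auto simp: cochain_S4_iff\<close>)
  then show "coord_multilinear n (\<lambda>xs c. qcoord c (lincomb K r cc xs))"
    by (rule coord_multilinear_cong) (simp add: qcoord_lincomb)
qed

definition coord_cocycle :: "nat \<Rightarrow> ('r::comm_ring_1 mat list \<Rightarrow> 'r mat) \<Rightarrow> bool" where
  "coord_cocycle n f \<longleftrightarrow> (\<forall>xs\<in>tuples S4 (Suc n). \<forall>c<6. qcoord c (hdiff n f xs) = 0)"

lemma cocycle_S4_iff: "cocycle (S4::'r::comm_ring_1 mat set) n f \<longleftrightarrow> cochain S4 n f \<and> coord_cocycle n f"
  by (simp add: cocycle_def coord_cocycle_def S4_iff_qcoord)

section \<open>Normalized cocycles\<close>

definition normal_upto :: "nat \<Rightarrow> nat \<Rightarrow> ('r::comm_ring_1 mat list \<Rightarrow> 'r mat) \<Rightarrow> bool" where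
  "normal_upto K n f \<longleftrightarrow> (\<forall>ys\<in>tuples S4 n. \<forall>p. p < K \<longrightarrow> p < n \<longrightarrow> ys!p = 1\<^sub>m 3 \<longrightarrow> (\<forall>c<6. qcoord c (f ys) = 0))"

lemma face_eq_face_Suc_at_one:
  assumes hc: "\<forall>ys\<in>tuples S4 m. h ys \<in> carrier_mat 3 3"
    and u: "u \<in> tuples (S4::'r::comm_ring_1 mat set) (Suc m)" and j: "j \<le> m" "u!j = 1\<^sub>m 3"
  shows "face m j h u = face m (Suc j) h u"
proof -
  have len: "length u = Suc m" using tuples_len[OF u] .
  have uc: "\<And>k. k < Suc m \<Longrightarrow> u!k \<in> carrier_mat 3 3" using tuples_nth_carrier[OF u] .
  show ?thesis
  proof (cases "j = 0")
    case True
    have d: "drop (Suc 0) u \<in> tuples S4 m" using tuples_drop1[OF u] by simp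
    have hd: "h (drop (Suc 0) u) \<in> carrier_mat 3 3" using hc d by blast
    have e0: "face m j h u = h (drop (Suc 0) u)"
      using True j by (simp add: face_def left_mult_one_mat[OF hd])
    show ?thesis
    proof (cases "m = 0")
      case True
      then have "drop (Suc 0) u = take m u" using len by simp
      then show ?thesis using e0 \<open>j = 0\<close> True j hd by (simp add: face_def right_mult_one_mat[of _ 3 3])
    next
      case False
      then show ?thesis using e0 \<open>j = 0\<close> merge_at0_unit[of u] j len uc[of 1] by (simp add: face_def)
    qed
  next
    case False
    show ?thesis
    proof (cases "Suc j \<le> m")
      case True
      have "merge_at (j-1) u = merge_at j u" by (rule merge_at_unit_eq) (use False True j len uc in auto)
      then show ?thesis using False True by (simp add: face_def)
    next
      case nj: False
      then have jeq: "j = m" using j by simp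
      have t: "take m u \<in> tuples S4 m" using tuples_take[OF u] .
      have "merge_at (m-1) u = take m u" by (rule merge_at_last_unit) (use False jeq j len uc in auto)
      then show ?thesis using False jeq j hc t by (simp add: face_def right_mult_one_mat[of _ 3 3])
    qed
  qed
qed

lemma qcoord_face_normal_upto_one:
  assumes hc: "\<forall>ys\<in>tuples S4 m. h ys \<in> carrier_mat 3 3" and hv: "normal_upto K m h" and K: "K \<le> Suc m"
    and u: "u \<in> tuples (S4::'r::comm_ring_1 mat set) (Suc m)" and j: "j < K" "u!j = 1\<^sub>m 3" and c: "c < 6"
    and i: "i \<le> Suc m" "i \<noteq> j" "i \<noteq> Suc j"
  shows "qcoord c (face m i h u) = 0"
proof -
  have len: "length u = Suc m" using tuples_len[OF u] .
  have us: "\<And>k. k < Suc m \<Longrightarrow> u!k \<in> S4" using tuples_nth[OF u] .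
  have jm: "j \<le> m" using j K by linarith
  have hvz: "\<And>ys p d. ys \<in> tuples S4 m \<Longrightarrow> p < K \<Longrightarrow> p < m \<Longrightarrow> ys!p = 1\<^sub>m 3 \<Longrightarrow> d < 6 \<Longrightarrow> qcoord d (h ys) = 0"
    using hv unfolding normal_upto_def by blast
  have hc': "\<And>ys. ys \<in> tuples S4 m \<Longrightarrow> h ys \<in> carrier_mat 3 3" using hc by blast
  consider "i = 0" | "i \<noteq> 0" "i \<le> m" | "i = Suc m" using i by linarith
  then show ?thesis
  proof cases
    case 1
    have d: "drop 1 u \<in> tuples S4 m" using tuples_drop1[OF u] .
    have "(drop 1 u)!(j-1) = 1\<^sub>m 3" using j 1 i len jm by simp
    then have "\<And>d. d < 6 \<Longrightarrow> qcoord d (h (drop 1 u)) = 0"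
      using hvz[OF d, of "j-1"] j 1 i jm by simp
    then show ?thesis using 1 qcoord_mult_left_zero[OF us[of 0] hc'[OF d] c] by (simp add: face_def)
  next
    case 2
    have t: "merge_at (i-1) u \<in> tuples S4 m" using tuples_merge_at[OF u] 2 by simp
    have "qcoord c (h (merge_at (i-1) u)) = 0"
    proof (cases "i < j")
      case True
      have ij: "i - 1 < j - 1" "Suc (j - 1) = j" using True 2 by linarith+
      have "(merge_at (i-1) u)!(j-1) = 1\<^sub>m 3" using True 2 j len jm ij by (simp add: nth_merge_at)
      then show ?thesis using hvz[OF t, of "j-1" c] True j jm c by simp
    next
      case False
      then have "Suc j < i" using i by linarith
      then have "j < i - Suc 0" by linarith
      then have "(merge_at (i-1) u)!j = 1\<^sub>m 3" using 2 j len by (simp add: nth_merge_at)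
      then show ?thesis using hvz[OF t, of j c] \<open>Suc j < i\<close> 2 j c by simp
    qed
    then show ?thesis using 2 by (simp add: face_def)
  next
    case 3
    have t: "take m u \<in> tuples S4 m" using tuples_take[OF u] .
    have "\<And>d. d < 6 \<Longrightarrow> qcoord d (h (take m u)) = 0"
      using hvz[OF t, of j] 3 i jm j by simp
    then show ?thesis using 3 qcoord_mult_right_zero[OF us[of m] hc'[OF t] c] by (simp add: face_def)
  qed
qed

text \<open>In the alternating sum for \<open>hdiff m h u\<close> only the faces \<open>j\<close> and \<open>j + 1\<close> survive, and they cancel.\<close>
lemma qcoord_hdiff_normal_upto_one:
  assumes hc: "\<forall>ys\<in>tuples S4 m. h ys \<in> carrier_mat 3 3" and hv: "normal_upto K m h" and K: "K \<le> Suc m"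
    and u: "u \<in> tuples (S4::'r::comm_ring_1 mat set) (Suc m)" and j: "j < K" "u!j = 1\<^sub>m 3" and c: "c < 6"
  shows "qcoord c (hdiff m h u) = 0"
  unfolding qcoord_hdiff
proof (rule alternating_sum_pair_eq_0[where j=j])
  show "j < Suc m" using j K by simp
  show "qcoord c (face m i h u) = 0" if "i \<le> Suc m" "i \<noteq> j" "i \<noteq> Suc j" for i
    by (rule qcoord_face_normal_upto_one[OF hc hv K u j c that])
  show "qcoord c (face m j h u) = qcoord c (face m (Suc j) h u)"
    using face_eq_face_Suc_at_one[OF hc u _ j(2)] j K by simp
qed

text \<open>One normalization step: if the cocycle \<open>z\<close> vanishes whenever one of its first \<open>k\<close> arguments
  is \<open>1\<close>, then adding a suitable multiple of the coboundary of \<open>insert_one\<close>, obtained from \<open>z\<close> by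
  inserting \<open>1\<close> at position \<open>k\<close>, makes it vanish also when argument \<open>k\<close> is \<open>1\<close>.\<close>

context
  fixes z :: "'r::comm_ring_1 mat list \<Rightarrow> 'r mat" and m k :: nat
  assumes z: "cochain S4 (Suc m) z" and zc: "coord_cocycle (Suc m) z" and zv: "normal_upto k (Suc m) z" and k: "k < Suc m"
begin

definition insert_one :: "'r mat list \<Rightarrow> 'r mat" where "insert_one as = z (insert_at k (1\<^sub>m 3) as)"

lemma z_carrier: "\<forall>xs\<in>tuples S4 (Suc m). z xs \<in> carrier_mat 3 3" and z_coord_multilinear: "coord_multilinear (Suc m) (\<lambda>xs c. qcoord c (z xs))"
  using z by (auto simp: cochain_S4_iff)

lemma z_normal: "ys \<in> tuples S4 (Suc m) \<Longrightarrow> p < k \<Longrightarrow> ys!p = 1\<^sub>m 3 \<Longrightarrow> d < 6 \<Longrightarrow> qcoord d (z ys) = 0"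
  using zv k unfolding normal_upto_def by auto

lemma insert_one_cochain: "cochain S4 m insert_one"
  unfolding cochain_S4_iff
proof
  show "\<forall>xs\<in>tuples S4 m. insert_one xs \<in> carrier_mat 3 3"
    using z_carrier tuples_insert_at[of _ S4 m k] k S4_one unfolding insert_one_def by auto
  show "coord_multilinear m (\<lambda>xs c. qcoord c (insert_one xs))" unfolding coord_multilinear_def
  proof (intro ballI allI impI)
    fix as :: "'r mat list" and i :: nat and x y :: "'r mat" and r s :: 'r and c :: nat
    assume as: "as \<in> tuples S4 m" and i: "i < m" and x: "x \<in> S4" and y: "y \<in> S4" and c: "c < 6"
    have C: "insert_at k (1\<^sub>m 3) as \<in> tuples S4 (Suc m)" using tuples_insert_at[OF as _ S4_one] k by simp
    have len: "length as = m" using tuples_len[OF as] .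
    have e: "\<And>w. insert_at k (1\<^sub>m 3) (as[i:=w]) = (insert_at k (1\<^sub>m 3) as)[(if i < k then i else Suc i) := w]"
      using len k i by (simp add: insert_at_update)
    have "(if i < k then i else Suc i) < Suc m" using i by auto
    then show "qcoord c (insert_one (as[i := r \<cdot>\<^sub>m x + s \<cdot>\<^sub>m y])) = r * qcoord c (insert_one (as[i:=x])) + s * qcoord c (insert_one (as[i:=y]))"
      unfolding insert_one_def e using z_coord_multilinear C x y c unfolding coord_multilinear_def by blast
  qed
qed

lemma insert_one_carrier: "\<forall>ys\<in>tuples S4 m. insert_one ys \<in> carrier_mat 3 3"
  using insert_one_cochain by (simp add: cochain_S4_iff)

lemma insert_one_normal_upto: "normal_upto k m insert_one"
  unfolding normal_upto_def
proof (intro ballI allI impI)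
  fix ys :: "'r mat list" and p c :: nat assume ys: "ys \<in> tuples S4 m" and p: "p < k" "p < m" "ys!p = 1\<^sub>m 3" and c: "c < 6"
  have C: "insert_at k (1\<^sub>m 3) ys \<in> tuples S4 (Suc m)" using tuples_insert_at[OF ys _ S4_one] k by simp
  have len: "length ys = m" using tuples_len[OF ys] .
  have "(insert_at k (1\<^sub>m 3) ys)!p = 1\<^sub>m 3" using len p k by (simp add: nth_insert_at)
  then show "qcoord c (insert_one ys) = 0" using z_normal[OF C p(1) _ c] unfolding insert_one_def by simp
qed

lemma qcoord_face_insert_one_below:
  assumes b: "b \<in> tuples S4 (Suc m)" and i: "i < k" and c: "c < 6"
  shows "qcoord c (face (Suc m) i z (insert_at k (1\<^sub>m 3) b)) = 0"
proof -
  define C where "C = insert_at k (1\<^sub>m 3) b"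
  have Ct: "C \<in> tuples S4 (Suc (Suc m))" unfolding C_def using tuples_insert_at[OF b _ S4_one] k by simp
  have lenC: "length C = Suc (Suc m)" using tuples_len[OF Ct] .
  have Ck: "C!k = 1\<^sub>m 3" unfolding C_def using tuples_len[OF b] k by (simp add: nth_insert_at)
  have "qcoord c (face (Suc m) i z C) = 0"
  proof (cases "i = 0")
    case True
    have d: "drop 1 C \<in> tuples S4 (Suc m)" using tuples_drop1[OF Ct] .
    have "(drop 1 C)!(k-1) = 1\<^sub>m 3" using Ck i True lenC k by simp
    then have "\<And>d. d < 6 \<Longrightarrow> qcoord d (z (drop 1 C)) = 0" using z_normal[OF d, of "k-1"] i True by simp
    then show ?thesis
      using True qcoord_mult_left_zero[OF tuples_nth[OF Ct, of 0] _ c] z_carrier d by (simp add: face_def)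
  next
    case False
    have t: "merge_at (i-1) C \<in> tuples S4 (Suc m)" using tuples_merge_at[OF Ct, of "i-1"] i k False by simp
    have ik: "i - 1 < k - 1" "Suc (k - 1) = k" using i False by linarith+
    have "(merge_at (i-1) C)!(k-1) = 1\<^sub>m 3" using Ck ik lenC k by (simp add: nth_merge_at)
    then have "qcoord c (z (merge_at (i-1) C)) = 0" using z_normal[OF t, of "k-1" c] i c ik by simp
    then show ?thesis using False i k by (simp add: face_def)
  qed
  then show ?thesis unfolding C_def .
qed

lemma face_insert_one_at:
  assumes b: "b \<in> tuples S4 (Suc m)"
  shows "face (Suc m) k z (insert_at k (1\<^sub>m 3) b) = z b"
    and "face (Suc m) (Suc k) z (insert_at k (1\<^sub>m 3) b) = z b"
proof -
  have lenb: "length b = Suc m" using tuples_len[OF b] .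
  have bc: "\<And>i. i < Suc m \<Longrightarrow> b!i \<in> carrier_mat 3 3" using tuples_nth_carrier[OF b] .
  show "face (Suc m) k z (insert_at k (1\<^sub>m 3) b) = z b"
  proof (cases "k = 0")
    case True
    then show ?thesis using z_carrier b by (simp add: face_def insert_at_def left_mult_one_mat[of _ 3 3])
  next
    case False
    have "merge_at (k-1) (insert_at k (1\<^sub>m 3) b) = b"
      by (rule merge_at_insert_one_left) (use False k lenb bc in auto)
    then show ?thesis using False k by (simp add: face_def)
  qed
  have "merge_at k (insert_at k (1\<^sub>m 3) b) = b"
    by (rule merge_at_insert_one_right) (use k lenb bc in auto)
  then show "face (Suc m) (Suc k) z (insert_at k (1\<^sub>m 3) b) = z b" using k by (simp add: face_def)
qed

lemma face_insert_one_above: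
  assumes b: "b \<in> tuples S4 (Suc m)" and i: "Suc k < i" "i \<le> Suc (Suc m)"
  shows "face (Suc m) i z (insert_at k (1\<^sub>m 3) b) = face m (i - 1) insert_one b"
proof (cases "i \<le> Suc m")
  case True
  have "merge_at (i-1) (insert_at k (1\<^sub>m 3) b) = insert_at k (1\<^sub>m 3) (merge_at (i-1-1) b)"
    by (rule merge_at_insert_at) (use i True tuples_len[OF b] in auto)
  moreover have "i - Suc 0 \<le> m" using True i by linarith
  ultimately show ?thesis using i True by (simp add: face_def insert_one_def)
next
  case False
  then have "i = Suc (Suc m)" using i by simp
  moreover have "take (Suc m) (insert_at k (1\<^sub>m 3) b) = insert_at k (1\<^sub>m 3) (take m b)"
    "insert_at k (1\<^sub>m 3) b ! Suc m = b!m"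
    using k tuples_len[OF b] by (auto simp: take_insert_at nth_insert_at)
  ultimately show ?thesis by (simp add: face_def insert_one_def)
qed

text \<open>The cocycle identity for \<open>z\<close> at \<open>insert_at k 1 b\<close>: its first \<open>k + 2\<close> terms cancel and the
  remaining ones are, up to sign, the last faces of \<open>insert_one\<close> at \<open>b\<close>.\<close>

lemma qcoord_hdiff_insert_one_sum:
  assumes b: "b \<in> tuples S4 (Suc m)" and c: "c < 6"
  shows "qcoord c (hdiff m insert_one b) = (\<Sum>i\<le>k. (-1)^i * qcoord c (face m i insert_one b))"
proof -
  define A where "A i = qcoord c (face (Suc m) i z (insert_at k (1\<^sub>m 3) b))" for i
  define B where "B i = qcoord c (face m i insert_one b)" for i
  have "insert_at k (1\<^sub>m 3) b \<in> tuples S4 (Suc (Suc m))" using tuples_insert_at[OF b _ S4_one] k by simp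
  then have S0: "(\<Sum>i\<le>Suc (Suc m). (-1)^i * A i) = 0"
    using zc c unfolding coord_cocycle_def A_def qcoord_hdiff by blast
  have S1: "(\<Sum>i\<le>Suc k. (-1)^i * A i) = 0"
  proof -
    have "(\<Sum>i\<le>Suc k. (-1)^i * A i) = (\<Sum>i<k. (-1)^i * A i) + (-1)^k * A k + (-1)^(Suc k) * A (Suc k)"
      by (simp add: lessThan_Suc_atMost[symmetric])
    also have "(\<Sum>i<k. (-1)^i * A i) = 0" using qcoord_face_insert_one_below[OF b _ c] by (simp add: A_def)
    finally show ?thesis using face_insert_one_at[OF b] by (simp add: A_def)
  qed
  have S2: "(\<Sum>i\<in>{Suc (Suc k)..Suc (Suc m)}. (-1)^i * A i) = - (\<Sum>i\<in>{Suc k..Suc m}. (-1)^i * B i)"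
  proof -
    have "(\<Sum>i\<in>{Suc (Suc k)..Suc (Suc m)}. (-1)^i * A i) = (\<Sum>i\<in>{Suc k..Suc m}. (-1)^(Suc i) * A (Suc i))"
      by (rule sum.shift_bounds_cl_Suc_ivl)
    also have "\<dots> = (\<Sum>i\<in>{Suc k..Suc m}. - ((-1)^i * B i))"
      by (intro sum.cong refl) (simp add: A_def B_def face_insert_one_above[OF b])
    finally show ?thesis by (simp add: sum_negf)
  qed
  have "(\<Sum>i\<le>Suc (Suc m). (-1)^i * A i) = (\<Sum>i\<le>Suc k. (-1)^i * A i) + (\<Sum>i\<in>{Suc (Suc k)..Suc (Suc m)}. (-1)^i * A i)"
    by (rule sum_split_at) (use k in simp)
  then have T: "(\<Sum>i\<in>{Suc k..Suc m}. (-1)^i * B i) = 0" using S0 S1 S2 by simp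
  have "qcoord c (hdiff m insert_one b) = (\<Sum>i\<le>Suc m. (-1)^i * B i)" unfolding B_def qcoord_hdiff ..
  also have "\<dots> = (\<Sum>i\<le>k. (-1)^i * B i) + (\<Sum>i\<in>{Suc k..Suc m}. (-1)^i * B i)"
    by (rule sum_split_at) (use k in simp)
  finally show ?thesis using T unfolding B_def by simp
qed

lemma qcoord_hdiff_insert_one_at:
  assumes a: "a \<in> tuples S4 (Suc m)" and ak: "a!k = 1\<^sub>m 3" and c: "c < 6"
  shows "qcoord c (hdiff m insert_one a) = (-1)^k * qcoord c (z a)"
proof -
  have lena: "length a = Suc m" using tuples_len[OF a] .
  have ac: "\<And>i. i < Suc m \<Longrightarrow> a!i \<in> carrier_mat 3 3" using tuples_nth_carrier[OF a] .
  have as: "\<And>i. i < Suc m \<Longrightarrow> a!i \<in> S4" using tuples_nth[OF a] .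
  have hv: "\<And>ys p d. ys \<in> tuples S4 m \<Longrightarrow> p < k \<Longrightarrow> p < m \<Longrightarrow> ys!p = 1\<^sub>m 3 \<Longrightarrow> d < 6 \<Longrightarrow> qcoord d (insert_one ys) = 0"
    using insert_one_normal_upto unfolding normal_upto_def by blast
  have Z: "qcoord c (face m i insert_one a) = 0" if i: "i < k" for i
  proof (cases "i = 0")
    case True
    have d: "drop 1 a \<in> tuples S4 m" using tuples_drop1[OF a] .
    have "(drop 1 a)!(k-1) = 1\<^sub>m 3" using ak i True lena k by simp
    then have "\<And>d. d < 6 \<Longrightarrow> qcoord d (insert_one (drop 1 a)) = 0" using hv[OF d, of "k-1"] i True k by simp
    then show ?thesis using True qcoord_mult_left_zero[OF as[of 0] _ c] insert_one_carrier d by (simp add: face_def)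
  next
    case False
    have t: "merge_at (i-1) a \<in> tuples S4 m" using tuples_merge_at[OF a, of "i-1"] i k False by simp
    have ik: "i - 1 < k - 1" "Suc (k - 1) = k" using i False by linarith+
    have "(merge_at (i-1) a)!(k-1) = 1\<^sub>m 3" using ak ik lena k by (simp add: nth_merge_at)
    then have "qcoord c (insert_one (merge_at (i-1) a)) = 0" using hv[OF t, of "k-1" c] i c ik k by simp
    then show ?thesis using False i k by (simp add: face_def)
  qed
  have E: "face m k insert_one a = z a"
  proof (cases "k = 0")
    case True
    have "insert_at 0 (1\<^sub>m 3) (drop 1 a) = a" by (rule insert_at_0_drop) (use True ak lena in auto)
    then show ?thesis using True ak z_carrier a unfolding insert_one_def by (simp add: face_def left_mult_one_mat[of _ 3 3])
  next
    case False
    have "insert_at k (1\<^sub>m 3) (merge_at (k-1) a) = a" by (rule insert_at_merge_at) (use False ak lena k ac in auto)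
    then show ?thesis using False k unfolding insert_one_def by (simp add: face_def)
  qed
  have "qcoord c (hdiff m insert_one a) = (\<Sum>i\<le>k. (-1)^i * qcoord c (face m i insert_one a))" by (rule qcoord_hdiff_insert_one_sum[OF a c])
  also have "\<dots> = (\<Sum>i<k. (-1)^i * qcoord c (face m i insert_one a)) + (-1)^k * qcoord c (face m k insert_one a)"
    by (simp add: lessThan_Suc_atMost[symmetric])
  also have "(\<Sum>i<k. (-1)^i * qcoord c (face m i insert_one a)) = 0" using Z by simp
  finally show ?thesis using E by simp
qed

lemma normalize_step_coord_cocycle: "coord_cocycle (Suc m) (\<lambda>xs. z xs + (- ((-1)^k)) \<cdot>\<^sub>m hdiff m insert_one xs)"
  unfolding coord_cocycle_def
proof (intro ballI allI impI)
  fix xs :: "'r mat list" and c :: nat assume xs: "xs \<in> tuples S4 (Suc (Suc m))" and c: "c < 6"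
  have "qcoord c (hdiff (Suc m) (\<lambda>xs. z xs + (- ((-1)^k)) \<cdot>\<^sub>m hdiff m insert_one xs) xs) = qcoord c (hdiff (Suc m) z xs) + (- ((-1)^k)) * qcoord c (hdiff (Suc m) (hdiff m insert_one) xs)"
    by (rule qcoord_hdiff_add_smult[OF z_carrier _ xs c]) simp
  also have "\<dots> = 0" using zc xs c hdiff_hdiff[OF insert_one_carrier xs] unfolding coord_cocycle_def by simp
  finally show "qcoord c (hdiff (Suc m) (\<lambda>xs. z xs + (- ((-1)^k)) \<cdot>\<^sub>m hdiff m insert_one xs) xs) = 0" .
qed

lemma normalize_step_normal_upto: "normal_upto (Suc k) (Suc m) (\<lambda>xs. z xs + (- ((-1)^k)) \<cdot>\<^sub>m hdiff m insert_one xs)"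
  unfolding normal_upto_def
proof (intro ballI allI impI)
  fix a :: "'r mat list" and p c :: nat
  assume a: "a \<in> tuples S4 (Suc m)" and p: "p < Suc k" "p < Suc m" "a!p = 1\<^sub>m 3" and c: "c < 6"
  have zca: "z a \<in> carrier_mat 3 3" using z_carrier a by blast
  have E: "qcoord c (z a + (- ((-1)^k)) \<cdot>\<^sub>m hdiff m insert_one a) = qcoord c (z a) + (- ((-1)^k)) * qcoord c (hdiff m insert_one a)"
    using zca by (simp add: qcoord_add qcoord_smult)
  show "qcoord c (z a + (- ((-1)^k)) \<cdot>\<^sub>m hdiff m insert_one a) = 0"
  proof (cases "p < k")
    case True
    have "qcoord c (z a) = 0" using z_normal[OF a True p(3) c] .
    moreover have "qcoord c (hdiff m insert_one a) = 0"
      by (rule qcoord_hdiff_normal_upto_one[OF insert_one_carrier insert_one_normal_upto _ a True p(3) c]) (use k in simp)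
    ultimately show ?thesis using E by simp
  next
    case False
    then have pk: "p = k" using p by simp
    have one: "((-1::'r)^k) * (-1)^k = 1" by (simp add: power_mult_distrib[symmetric])
    have "qcoord c (hdiff m insert_one a) = (-1)^k * qcoord c (z a)" using qcoord_hdiff_insert_one_at[OF a _ c] p pk by simp
    then show ?thesis using E one by (simp add: mult.assoc[symmetric])
  qed
qed

end

lemma cocycle_normalization:
  assumes z: "cochain (S4::'r::comm_ring_1 mat set) (Suc m) z" and zc: "coord_cocycle (Suc m) z"
  shows "\<exists>z' g. cochain S4 (Suc m) z' \<and> coord_cocycle (Suc m) z' \<and> normal_upto (Suc m) (Suc m) z' \<and> cochain S4 m g \<and>
     (\<forall>xs\<in>tuples S4 (Suc m). \<forall>c<6. qcoord c (z xs) = qcoord c (z' xs) + qcoord c (hdiff m g xs))"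
proof -
  have "k \<le> Suc m \<Longrightarrow> \<exists>z' g. cochain S4 (Suc m) z' \<and> coord_cocycle (Suc m) z' \<and> normal_upto k (Suc m) z' \<and> cochain S4 m g \<and>
     (\<forall>xs\<in>tuples S4 (Suc m). \<forall>c<6. qcoord c (z xs) = qcoord c (z' xs) + qcoord c (hdiff m g xs))" for k
  proof (induction k)
    case 0
    show ?case
      by (rule exI[of _ z], rule exI[of _ "\<lambda>_. 0\<^sub>m 3 3"]) (use z zc cochain_zero qcoord_hdiff_zero in \<open>auto simp: normal_upto_def\<close>)
  next
    case (Suc k)
    then obtain z' g where z': "cochain S4 (Suc m) z'" "coord_cocycle (Suc m) z'" "normal_upto k (Suc m) z'" "cochain S4 m g"
      and E: "\<forall>xs\<in>tuples S4 (Suc m). \<forall>c<6. qcoord c (z xs) = qcoord c (z' xs) + qcoord c (hdiff m g xs)" by auto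
    have k: "k < Suc m" using Suc.prems by simp
    define h where "h = insert_one z' k"
    define t :: 'r where "t = - ((-1)^k)"
    have hc: "cochain S4 m h" unfolding h_def by (rule insert_one_cochain[OF z'(1-3) k])
    have c1: "cochain S4 (Suc m) (\<lambda>xs. z' xs + t \<cdot>\<^sub>m hdiff m h xs)"
      by (rule cochain_add_smult[OF z'(1) hdiff_cochain[OF hc]])
    have c2: "coord_cocycle (Suc m) (\<lambda>xs. z' xs + t \<cdot>\<^sub>m hdiff m h xs)"
      unfolding h_def t_def by (rule normalize_step_coord_cocycle[OF z'(1-3) k])
    have c3: "normal_upto (Suc k) (Suc m) (\<lambda>xs. z' xs + t \<cdot>\<^sub>m hdiff m h xs)"
      unfolding h_def t_def by (rule normalize_step_normal_upto[OF z'(1-3) k])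
    have c4: "cochain S4 m (\<lambda>xs. g xs + (- t) \<cdot>\<^sub>m h xs)" by (rule cochain_add_smult[OF z'(4) hc])
    have gc: "\<forall>ys\<in>tuples S4 m. g ys \<in> carrier_mat 3 3" and hcc: "\<forall>ys\<in>tuples S4 m. h ys \<in> carrier_mat 3 3"
      and zc': "\<forall>ys\<in>tuples S4 (Suc m). z' ys \<in> carrier_mat 3 3"
      using z'(4) hc z'(1) by (auto simp: cochain_S4_iff)
    have c5: "\<forall>xs\<in>tuples S4 (Suc m). \<forall>c<6. qcoord c (z xs) = qcoord c (z' xs + t \<cdot>\<^sub>m hdiff m h xs) + qcoord c (hdiff m (\<lambda>xs. g xs + (- t) \<cdot>\<^sub>m h xs) xs)"
    proof (intro ballI allI impI)
      fix xs :: "'r mat list" and c :: nat assume xs: "xs \<in> tuples S4 (Suc m)" and c: "c < 6"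
      have "qcoord c (hdiff m (\<lambda>xs. g xs + (- t) \<cdot>\<^sub>m h xs) xs) = qcoord c (hdiff m g xs) + (- t) * qcoord c (hdiff m h xs)"
        by (rule qcoord_hdiff_add_smult[OF gc hcc xs c])
      moreover have "qcoord c (z' xs + t \<cdot>\<^sub>m hdiff m h xs) = qcoord c (z' xs) + t * qcoord c (hdiff m h xs)"
        using zc' xs by (simp add: qcoord_add qcoord_smult)
      ultimately show "qcoord c (z xs) = qcoord c (z' xs + t \<cdot>\<^sub>m hdiff m h xs) + qcoord c (hdiff m (\<lambda>xs. g xs + (- t) \<cdot>\<^sub>m h xs) xs)"
        using E xs c by simp
    qed
    show ?case using c1 c2 c3 c4 c5 by blast
  qed
  from this[of "Suc m"] show ?thesis by simp
qed

section \<open>Cochains on words in the generators\<close>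

text \<open>Words in \<open>b\<close> and \<open>c\<close> are encoded as boolean lists (\<open>True\<close> for \<open>c\<close>). \<open>word_cochain n F\<close> is the
  multilinear cochain that only sees the \<open>b\<close>- and \<open>c\<close>-components of its arguments and takes the
  value \<open>F w\<close> on the word \<open>w\<close>.\<close>

definition letter :: "bool \<Rightarrow> 'r::comm_ring_1 mat" where "letter b = (if b then gen_c else gen_b)"

definition letter_coeff :: "bool \<Rightarrow> 'r::comm_ring_1 mat \<Rightarrow> 'r" where "letter_coeff b a = (if b then a$$(0,2) else a$$(0,1))"

definition word_cochain :: "nat \<Rightarrow> (bool list \<Rightarrow> 'r::comm_ring_1 mat) \<Rightarrow> 'r mat list \<Rightarrow> 'r mat" where
  "word_cochain n F xs = mat 3 3 (\<lambda>(p,q). \<Sum>w\<in>{w. length w = n}. (\<Prod>i<n. letter_coeff (w!i) (xs!i)) * F w $$ (p,q))"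

lemma finite_words: "finite {w::bool list. length w = n}"
  using finite_lists_length_eq[of "UNIV::bool set" n] by simp

lemma letter_S4[simp]: "letter b \<in> S4" by (simp add: letter_def)

lemma letter_index[simp]: "letter b $$ (0,0) = 0" "letter b $$ (0,1) = (if b then 0 else 1)" "letter b $$ (0,2) = (if b then 1 else 0)"
  "letter b $$ (0,Suc 0) = (if b then 0 else 1)"
  by (simp_all add: letter_def gen_b_def gen_c_def)

lemma letter_coeff_letter: "letter_coeff b (letter c) = (if b = c then 1 else 0)"
  by (simp add: letter_coeff_def letter_def gen_b_def gen_c_def)

lemma letter_coeff_one: "letter_coeff b (1\<^sub>m 3) = 0"
  by (simp add: letter_coeff_def)

lemma letter_coeff_lincomb: "x \<in> carrier_mat 3 3 \<Longrightarrow> y \<in> carrier_mat 3 3 \<Longrightarrow> letter_coeff b (r \<cdot>\<^sub>m x + s \<cdot>\<^sub>m y) = r * letter_coeff b x + s * letter_coeff b y"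
  by (simp add: letter_coeff_def)

lemma word_cochain_carrier[simp]: "word_cochain n F xs \<in> carrier_mat 3 3"
  by (simp add: word_cochain_def)

lemma word_cochain_dim[simp]: "dim_row (word_cochain n F xs) = 3" "dim_col (word_cochain n F xs) = 3"
  by (simp_all add: word_cochain_def)

lemma prod_list_update:
  assumes "k < n" "k < length xs"
  shows "(\<Prod>i<n. f i ((xs[k:=v])!i)) = f k v * (\<Prod>i\<in>{..<n}-{k}. f i (xs!i))"
proof -
  have "(\<Prod>i<n. f i ((xs[k:=v])!i)) = f k ((xs[k:=v])!k) * (\<Prod>i\<in>{..<n}-{k}. f i ((xs[k:=v])!i))"
    by (rule prod.remove) (use assms in auto)
  also have "(\<Prod>i\<in>{..<n}-{k}. f i ((xs[k:=v])!i)) = (\<Prod>i\<in>{..<n}-{k}. f i (xs!i))"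
    by (rule prod.cong) auto
  finally show ?thesis using assms by simp
qed

lemma word_cochain_lincomb:
  assumes xs: "xs \<in> tuples (S4::'r::comm_ring_1 mat set) n" and k: "k < n" and x: "x \<in> S4" and y: "y \<in> S4"
  shows "word_cochain n F (xs[k := r \<cdot>\<^sub>m x + s \<cdot>\<^sub>m y]) = r \<cdot>\<^sub>m word_cochain n F (xs[k:=x]) + s \<cdot>\<^sub>m word_cochain n F (xs[k:=y])"
proof (rule eq_matI)
  fix p q assume "p < dim_row (r \<cdot>\<^sub>m word_cochain n F (xs[k:=x]) + s \<cdot>\<^sub>m word_cochain n F (xs[k:=y]))" "q < dim_col (r \<cdot>\<^sub>m word_cochain n F (xs[k:=x]) + s \<cdot>\<^sub>m word_cochain n F (xs[k:=y]))"
  then have pq: "p < 3" "q < 3" by auto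
  have len: "k < length xs" using tuples_len[OF xs] k by simp
  have xc: "x \<in> carrier_mat 3 3" "y \<in> carrier_mat 3 3" using x y S4_carrier by auto
  have P: "\<And>v. (\<Prod>i<n. letter_coeff (w!i) ((xs[k:=v])!i)) = letter_coeff (w!k) v * (\<Prod>i\<in>{..<n}-{k}. letter_coeff (w!i) (xs!i))" for w
    using prod_list_update[OF k len, where f="\<lambda>i. letter_coeff (w!i)"] by simp
  show "word_cochain n F (xs[k := r \<cdot>\<^sub>m x + s \<cdot>\<^sub>m y]) $$ (p, q) = (r \<cdot>\<^sub>m word_cochain n F (xs[k:=x]) + s \<cdot>\<^sub>m word_cochain n F (xs[k:=y])) $$ (p, q)"
    using pq by (simp add: word_cochain_def P letter_coeff_lincomb[OF xc] sum_distrib_left sum.distrib algebra_simps)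
qed auto

lemma cochain_word_cochain: "cochain (S4::'r::comm_ring_1 mat set) n (word_cochain n F)"
  unfolding cochain_S4_iff
proof
  show "\<forall>xs\<in>tuples S4 n. word_cochain n F xs \<in> carrier_mat 3 3" by simp
  show "coord_multilinear n (\<lambda>xs c. qcoord c (word_cochain n F xs))" unfolding coord_multilinear_def
    by (auto simp: word_cochain_lincomb qcoord_add qcoord_smult)
qed

lemma word_cochain_one:
  assumes "j < n" "xs!j = 1\<^sub>m 3"
  shows "word_cochain n F xs = (0\<^sub>m 3 3 :: 'r::comm_ring_1 mat)"
proof -
  have "(\<Prod>i<n. letter_coeff (w!i) (xs!i)) = 0" for w
    using assms by (intro prod_zero) (auto simp: letter_coeff_one intro!: bexI[of _ j])
  then show ?thesis by (intro eq_matI) (auto simp: word_cochain_def)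
qed

lemma word_cochain_normal_upto: "normal_upto K n (word_cochain n F :: 'r::comm_ring_1 mat list \<Rightarrow> 'r mat)"
  unfolding normal_upto_def using word_cochain_one by fastforce

lemma word_cochain_word:
  assumes u: "length u = n" and F: "F u \<in> carrier_mat 3 3"
  shows "word_cochain n F (map letter u) = (F u :: 'r::comm_ring_1 mat)"
proof -
  have P: "(\<Prod>i<n. letter_coeff (w!i) (map letter u ! i)) = (if w = u then 1 else (0::'r))" if w: "length w = n" for w
  proof (cases "w = u")
    case True then show ?thesis using u by (simp add: letter_coeff_letter)
  next
    case False
    from False w u have "\<exists>j<n. w!j \<noteq> u!j" by (auto simp: list_eq_iff_nth_eq)
    then obtain j where j: "j < n" "w!j \<noteq> u!j" by blast
    have "(\<Prod>i<n. letter_coeff (w!i) (map letter u ! i)) = (0::'r)"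
      using j u by (intro prod_zero) (auto simp: letter_coeff_letter intro!: bexI[of _ j])
    then show ?thesis using False by simp
  qed
  show ?thesis
  proof (rule eq_matI)
    fix p q assume "p < dim_row (F u)" "q < dim_col (F u)"
    then have pq: "p < 3" "q < 3" using F by auto
    have "word_cochain n F (map letter u) $$ (p,q) = (\<Sum>w\<in>{w. length w = n}. (\<Prod>i<n. letter_coeff (w!i) (map letter u ! i)) * F w $$ (p,q))"
      using pq by (simp add: word_cochain_def)
    also have "\<dots> = (\<Sum>w\<in>{w. length w = n}. (if w = u then F w $$ (p,q) else 0))"
      by (rule sum.cong) (auto simp: P)
    also have "\<dots> = F u $$ (p,q)" using u finite_words by (simp add: sum.delta)
    finally show "word_cochain n F (map letter u) $$ (p,q) = F u $$ (p,q)" .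
  qed (use F in auto)
qed

lemma letter_mult: "letter a * letter b = (0\<^sub>m 3 3 :: 'r::comm_ring_1 mat)"
proof -
  have "letter a * letter b = S4_mat (0::'r) 0 0"
    by (cases a; cases b) (simp_all add: letter_def gen_b_def gen_c_def S4_mat_mult)
  also have "\<dots> = 0\<^sub>m 3 3" by (rule mat_3_eqI) auto
  finally show ?thesis .
qed

lemma lcoord_letter: "lcoord (letter b) c k = (if c = 5 then (if b then k 1 else k 0) else 0)"
  by (simp add: lcoord_def)

lemma rcoord_letter: "rcoord (letter b) c k = (if c = 2 then (if b then k 0 else 0) else if c = 3 then (if b then 0 else k 1)
   else if c = 4 then (if b then - k 1 else k 0) else if c = 5 then (if b then - k 1 else 0) else 0)"
  by (simp add: rcoord_def)

text \<open>Products of letters vanish, so on words only the two outer faces survive.\<close>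

lemma qcoord_hdiff_word:
  assumes g: "cochain (S4::'r::comm_ring_1 mat set) m g" and u: "length u = Suc m" and c: "c < 6"
  shows "qcoord c (hdiff m g (map letter u)) = lcoord (letter (hd u)) c (\<lambda>d. qcoord d (g (map letter (tl u))))
           + (-1)^(Suc m) * rcoord (letter (last u)) c (\<lambda>d. qcoord d (g (map letter (butlast u))))"
proof -
  have gc: "\<forall>ys\<in>tuples S4 m. g ys \<in> carrier_mat 3 3" using g by (simp add: cochain_S4_iff)
  have U: "map letter u \<in> tuples S4 (Suc m)" using u by (auto simp: tuples_def)
  define A where "A i = qcoord c (face m i g (map letter u))" for i
  have Z: "A i = 0" if "i \<noteq> 0" "i \<le> m" for i
  proof -
    have im: "i - 1 < m" using that by linarith
    have t: "merge_at (i-1) (map letter u) \<in> tuples S4 m" using tuples_merge_at[OF U im] .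
    have "merge_at (i-1) (map letter u) ! (i-1) = 0\<^sub>m 3 3" using that u by (simp add: nth_merge_at letter_mult)
    then show ?thesis unfolding A_def using that im cochain_zero_entry[OF g t im _ c] by (simp add: face_def)
  qed
  have "(\<Sum>i\<le>Suc m. (-1)^i * A i) = (\<Sum>i\<in>{0, Suc m}. (-1)^i * A i)"
    by (rule sum.mono_neutral_right) (use Z in auto)
  also have "\<dots> = A 0 + (-1)^(Suc m) * A (Suc m)" by simp
  finally have S: "qcoord c (hdiff m g (map letter u)) = A 0 + (-1)^(Suc m) * A (Suc m)"
    unfolding A_def qcoord_hdiff .
  have d: "drop 1 (map letter u) = map letter (tl u)" by (cases u) auto
  have tk: "take m (map letter u) = map letter (butlast u)" using u by (simp add: take_map butlast_conv_take)
  have h0: "map letter u ! 0 = letter (hd u)" using u by (cases u) auto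
  have lu: "last u = u!m" using u by (subst last_conv_nth) auto
  have hl: "map letter u ! m = letter (last u)" using u lu by simp
  have t1: "map letter (tl u) \<in> tuples S4 m" using u by (auto simp: tuples_def)
  have t2: "map letter (butlast u) \<in> tuples S4 m" using u by (auto simp: tuples_def)
  have F0: "face m 0 g (map letter u) = letter (hd u) * g (map letter (tl u))"
    unfolding face_def h0 d by simp
  have F1: "face m (Suc m) g (map letter u) = g (map letter (butlast u)) * letter (last u)"
    unfolding face_def tk hl by simp
  have "A 0 = lcoord (letter (hd u)) c (\<lambda>d. qcoord d (g (map letter (tl u))))"
    unfolding A_def F0 by (rule qcoord_mult_left[OF letter_S4 _ c]) (use gc t1 in blast)
  moreover have "A (Suc m) = rcoord (letter (last u)) c (\<lambda>d. qcoord d (g (map letter (butlast u))))"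
    unfolding A_def F1 by (rule qcoord_mult_right[OF letter_S4 _ c]) (use gc t2 in blast)
  ultimately show ?thesis using S by simp
qed

lemma S4_basis_tuple_cases:
  assumes xs: "xs \<in> tuples (S4::'r::comm_ring_1 mat set) n" and B: "set xs \<subseteq> S4_basis"
  obtains j where "j < n" "xs!j = 1\<^sub>m 3" | w where "length w = n" "xs = map letter w"
proof (cases "1\<^sub>m 3 \<in> set xs")
  case True
  then obtain j where "j < length xs" "xs!j = 1\<^sub>m 3" by (auto simp: in_set_conv_nth)
  then show ?thesis using that tuples_len[OF xs] by auto
next
  case False
  have neq: "gen_b \<noteq> (gen_c :: 'r mat)"
  proof
    assume "gen_b = (gen_c :: 'r mat)"
    then have "gen_b $$ (0,1) = (gen_c :: 'r mat) $$ (0,1)" by simp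
    then show False by (simp add: gen_b_def gen_c_def)
  qed
  have E: "\<forall>x\<in>set xs. x = gen_b \<or> x = gen_c" using False B by (auto simp: S4_basis_def)
  have "xs = map letter (map (\<lambda>x. x = gen_c) xs)"
    using E neq by (auto simp: letter_def intro!: nth_equalityI dest: nth_mem)
  then show ?thesis using that tuples_len[OF xs] by (metis length_map)
qed

section \<open>Degree zero\<close>

definition bottom_value :: "nat \<Rightarrow> 'r::comm_ring_1 mat" where
  "bottom_value l = (if l = 0 then Eij 0 0 else if l = 1 then Eij 1 1 else if l = 2 then Eij 1 2 else Eij 2 1)"

lemma bottom_value_carrier[simp]: "bottom_value l \<in> carrier_mat 3 3" by (simp add: bottom_value_def)

lemma qcoord_bottom_value: "c < 6 \<Longrightarrow> qcoord c (bottom_value l :: 'r::comm_ring_1 mat) =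
  (if l = 0 then (if c = 5 then 1 else 0) else if l = 1 then (if c = 4 then 1 else 0)
   else if l = 2 then (if c = 2 then 1 else 0) else (if c = 3 then 1 else 0))"
  by (auto simp: bottom_value_def qcoord_def Eij_def dest!: less_6_cases)

lemma tuples_Suc_0: "xs \<in> tuples A (Suc 0) \<longleftrightarrow> (\<exists>x\<in>A. xs = [x])"
  by (auto simp: tuples_def length_Suc_conv)

lemma qcoord_hdiff_0:
  assumes "x \<in> S4" "f [] \<in> carrier_mat 3 3" "c < 6"
  shows "qcoord c (hdiff 0 f [x]) = lcoord x c (\<lambda>d. qcoord d (f [])) - rcoord x c (\<lambda>d. qcoord d (f ([]::'r::comm_ring_1 mat list)))"
proof -
  have "qcoord c (hdiff 0 f [x]) = qcoord c (face 0 0 f [x]) - qcoord c (face 0 1 f [x])"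
    by (simp add: qcoord_hdiff)
  also have "face 0 0 f [x] = x * f []" by (simp add: face_def)
  also have "face 0 1 f [x] = f [] * x" by (simp add: face_def)
  finally show ?thesis using assms by (simp add: qcoord_mult_left qcoord_mult_right)
qed

lemma HH_free_of_rank_0: "HH_free_of_rank (S4::'r::comm_ring_1 mat set) 0 4"
  unfolding HH_free_of_rank_def
proof (intro exI[of _ "\<lambda>l _. bottom_value l"] conjI allI impI)
  fix l :: nat assume "l < 4"
  show "cocycle S4 0 (\<lambda>_. bottom_value l :: 'r mat)" unfolding cocycle_S4_iff coord_cocycle_def
  proof (intro conjI ballI allI impI)
    show "cochain S4 0 (\<lambda>_. bottom_value l :: 'r mat)" unfolding cochain_S4_iff coord_multilinear_def by simp
    fix xs :: "'r mat list" and c :: nat assume xs: "xs \<in> tuples S4 (Suc 0)" and c: "c < 6"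
    then obtain x where x: "x \<in> S4" "xs = [x]" by (auto simp: tuples_Suc_0)
    show "qcoord c (hdiff 0 (\<lambda>_. bottom_value l) xs) = 0"
      unfolding x(2) qcoord_hdiff_0[where f="\<lambda>_. bottom_value l", OF x(1) bottom_value_carrier c] using c
      by (simp add: lcoord_def rcoord_def qcoord_bottom_value)
  qed
next
  fix z :: "'r mat list \<Rightarrow> 'r mat" assume "cocycle S4 0 z"
  then have z: "cochain S4 0 z" and zc: "coord_cocycle 0 z" by (auto simp: cocycle_S4_iff)
  have Zc: "z [] \<in> carrier_mat 3 3" using z by (auto simp: cochain_S4_iff tuples_def)
  have ext: "[gen_b] \<in> tuples S4 (Suc 0)" by (simp add: tuples_Suc_0)
  have h3: "qcoord 3 (hdiff 0 z [gen_b]) = 0" "qcoord 4 (hdiff 0 z [gen_b]) = 0" using zc ext unfolding coord_cocycle_def by auto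
  have K0: "qcoord 0 (z []) = 0" "qcoord 1 (z []) = 0"
    using h3 qcoord_hdiff_0[where f=z, OF gen_b_S4 Zc, of 3] qcoord_hdiff_0[where f=z, OF gen_b_S4 Zc, of 4] by (auto simp: lcoord_def rcoord_def gen_b_def)
  define r :: "nat \<Rightarrow> 'r" where "r l = (if l = 0 then qcoord 5 (z []) else if l = 1 then qcoord 4 (z []) else if l = 2 then qcoord 2 (z []) else qcoord 3 (z []))" for l
  have "coboundary S4 0 (\<lambda>xs. z xs - lincomb 4 r (\<lambda>l _. bottom_value l) xs)"
  proof -
    have car: "z [] - lincomb 4 r (\<lambda>l _. bottom_value l) [] \<in> carrier_mat 3 3" by (rule minus_carrier_mat) simp
    have "\<forall>c<6. qcoord c (z [] - lincomb 4 r (\<lambda>l _. bottom_value l) []) = 0"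
      using K0 Zc by (auto simp: qcoord_minus qcoord_lincomb sum_lessThan_4 qcoord_bottom_value r_def dest!: less_6_cases)
    then show "coboundary S4 0 (\<lambda>xs. z xs - lincomb 4 r (\<lambda>l _. bottom_value l) xs)"
      unfolding coboundary_def using S4_iff_qcoord[OF car] by simp
  qed
  then show "\<exists>r. coboundary S4 0 (\<lambda>xs. z xs - lincomb 4 r (\<lambda>l _. bottom_value l) xs)" by blast
next
  fix r :: "nat \<Rightarrow> 'r" and l :: nat assume cb: "coboundary S4 0 (lincomb 4 r (\<lambda>l _. bottom_value l))" and l: "l < 4"
  then have "lincomb 4 r (\<lambda>l _. bottom_value l) [] \<in> S4" unfolding coboundary_def by auto
  then have "\<forall>c<6. qcoord c (lincomb 4 r (\<lambda>l _. bottom_value l) []) = 0" by (simp add: S4_iff_qcoord)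
  then have "r 0 = 0 \<and> r 1 = 0 \<and> r 2 = 0 \<and> r 3 = 0"
    by (auto simp: qcoord_lincomb sum_lessThan_4 qcoord_bottom_value dest: spec[of _ 5] spec[of _ 4] spec[of _ 2] spec[of _ 3])
  then show "r l = 0" using l by (auto simp: eval_nat_numeral less_Suc_eq)
qed

section \<open>Positive degrees\<close>

text \<open>In degree \<open>n \<ge> 1\<close> the basis cocycle indexed by \<open>t < 3\<close> and a word \<open>w\<close> takes the value
  \<open>top_value t w\<close> at \<open>w\<close> and vanishes on all other words. The coefficients of a cocycle with
  coordinates \<open>K\<close> on words are \<open>top_coeff t sg K w\<close>, where \<open>sg = (-1)^n\<close>; their correction
  terms come from the coboundary of the word cochain with values \<open>low_mat\<close>
  (see \<open>top_coeff_residual\<close>).\<close>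

definition top_value :: "nat \<Rightarrow> bool list \<Rightarrow> 'r::comm_ring_1 mat" where
  "top_value t u = (if t = 0 then Eij 1 1 else if t = 1 then Eij 0 0 else if last u then Eij 2 1 else Eij 1 2)"

lemma top_value_carrier[simp]: "top_value t u \<in> carrier_mat 3 3" by (simp add: top_value_def)

lemma qcoord_top_value: "c < 6 \<Longrightarrow> qcoord c (top_value t u :: 'r::comm_ring_1 mat) = (if t = 0 then (if c = 4 then 1 else 0) else if t = 1 then (if c = 5 then 1 else 0)
   else if last u then (if c = 3 then 1 else 0) else (if c = 2 then 1 else 0))"
  by (auto simp: top_value_def qcoord_def Eij_def dest!: less_6_cases)

definition low_mat :: "'r \<Rightarrow> 'r \<Rightarrow> 'r::comm_ring_1 mat" where
  "low_mat a b = mat 3 3 (\<lambda>(p,q). if p = 1 \<and> q = 0 then a else if p = 2 \<and> q = 0 then b else 0)"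

lemma low_mat_carrier[simp]: "low_mat a b \<in> carrier_mat 3 3" by (simp add: low_mat_def)

lemma qcoord_low_mat: "c < 6 \<Longrightarrow> qcoord c (low_mat a b) = (if c = 0 then a else if c = 1 then b else 0)"
  by (auto simp: qcoord_def low_mat_def dest!: less_6_cases)

definition top_coeff :: "nat \<Rightarrow> 'r::comm_ring_1 \<Rightarrow> (nat \<Rightarrow> bool list \<Rightarrow> 'r) \<Rightarrow> bool list \<Rightarrow> 'r" where
  "top_coeff t sg K w = (if t = 0 then K 4 w - (if last w then - K 3 (butlast w @ [False]) else K 2 (butlast w @ [True]))
     else if t = 1 then K 5 w - (sg * (if hd w then K 3 (tl w @ [False]) else K 2 (tl w @ [True])) - (if last w then K 3 (butlast w @ [False]) else 0))
     else (if last w then K 3 w else K 2 w))"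

lemma top_coeff_cong:
  assumes "\<And>c v. c < 6 \<Longrightarrow> length v = length w \<Longrightarrow> K1 c v = K2 c v" "w \<noteq> []"
  shows "top_coeff t sg K1 w = top_coeff t sg K2 w"
  using assms by (simp add: top_coeff_def)

lemma last_word: "w \<noteq> [] \<Longrightarrow> last w \<Longrightarrow> butlast w @ [True] = w"
  "w \<noteq> [] \<Longrightarrow> \<not> last w \<Longrightarrow> butlast w @ [False] = w"
  by (metis append_butlast_last_id)+

lemma top_coeff_hdiff_word:
  fixes Kg :: "nat \<Rightarrow> bool list \<Rightarrow> 'r::comm_ring_1"
  assumes sg: "sg * sg = 1" and t: "t < 3" and w: "w \<noteq> []"
  shows "top_coeff t sg (\<lambda>c v. lcoord (letter (hd v)) c (\<lambda>d. Kg d (tl v)) + sg * rcoord (letter (last v)) c (\<lambda>d. Kg d (butlast v))) w = 0"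
proof -
  have s: "\<And>x. sg * (sg * x) = x" using sg by (simp add: mult.assoc[symmetric])
  show ?thesis using t w by (auto simp: top_coeff_def lcoord_letter rcoord_letter s algebra_simps)
qed

lemma top_coeff_residual:
  fixes K :: "nat \<Rightarrow> bool list \<Rightarrow> 'r::comm_ring_1"
  assumes sg: "sg * sg = 1" and w: "w \<noteq> []" and K0: "K 0 w = 0" "K 1 w = 0" and c: "c < 6"
  shows "K c w - (\<Sum>t<3. top_coeff t sg K w * qcoord c (top_value t w))
    - (lcoord (letter (hd w)) c (\<lambda>d. qcoord d (low_mat (sg * K 2 (tl w @ [True])) (sg * K 3 (tl w @ [False]))))
       + sg * rcoord (letter (last w)) c (\<lambda>d. qcoord d (low_mat (sg * K 2 (butlast w @ [True])) (sg * K 3 (butlast w @ [False]))))) = 0"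
proof -
  have s: "\<And>x. sg * (sg * x) = x" using sg by (simp add: mult.assoc[symmetric])
  have L: "lcoord (letter b) c (\<lambda>d. qcoord d (low_mat x y)) = (if c = 5 then (if b then y else x) else 0)" for b x y
    by (simp add: lcoord_letter qcoord_low_mat)
  have R: "rcoord (letter b) c (\<lambda>d. qcoord d (low_mat x y)) = (if c = 2 then (if b then x else 0) else if c = 3 then (if b then 0 else y)
   else if c = 4 then (if b then - y else x) else if c = 5 then (if b then - y else 0) else 0)" for b x y
    by (simp add: rcoord_letter qcoord_low_mat)
  show ?thesis
    unfolding L R sum_lessThan_3 using c K0 last_word[OF w]
    by (cases "last w"; cases "hd w") (auto simp: top_coeff_def qcoord_top_value s algebra_simps dest!: less_6_cases)
qed

definition word_index :: "nat \<Rightarrow> bool list \<Rightarrow> nat" where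
  "word_index n = (SOME f. bij_betw f {w. length w = n} {..<2^n})"

definition index_word :: "nat \<Rightarrow> nat \<Rightarrow> bool list" where
  "index_word n = inv_into {w. length w = n} (word_index n)"

lemma bij_betw_word_index: "bij_betw (word_index n) {w. length w = n} {..<2^n}"
proof -
  have "card {w::bool list. length w = n} = 2^n"
    using card_lists_length_eq[of "UNIV::bool set" n] by simp
  moreover have "\<exists>f. bij_betw f {w::bool list. length w = n} {..<card {w::bool list. length w = n}}"
    using ex_bij_betw_finite_nat[OF finite_words] by (simp add: atLeast0LessThan)
  ultimately have "\<exists>f. bij_betw f {w::bool list. length w = n} {..<(2::nat)^n}"
    by simp
  then show ?thesis unfolding word_index_def by (rule someI_ex)
qed

lemma word_index_less: "length w = n \<Longrightarrow> word_index n w < 2^n"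
  using bij_betwE[OF bij_betw_word_index] by simp

lemma index_word_word_index: "length w = n \<Longrightarrow> index_word n (word_index n w) = w"
  unfolding index_word_def by (rule bij_betw_inv_into_left[OF bij_betw_word_index]) simp

lemma length_index_word: "i < 2^n \<Longrightarrow> length (index_word n i) = n"
  unfolding index_word_def using bij_betw_inv_into[OF bij_betw_word_index] by (auto dest: bij_betwE)

lemma word_index_index_word: "i < 2^n \<Longrightarrow> word_index n (index_word n i) = i"
  unfolding index_word_def using bij_betw_inv_into_right[OF bij_betw_word_index] by simp

lemma index_word_eq_iff: "length w = n \<Longrightarrow> i < 2^n \<Longrightarrow> index_word n i = w \<longleftrightarrow> i = word_index n w"
  by (metis index_word_word_index word_index_index_word)

text \<open>The basis index \<open>l < 3 * 2^n\<close> encodes the pair \<open>(l div 2^n, index_word n (l mod 2^n))\<close>.\<close>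
definition top_basis :: "nat \<Rightarrow> nat \<Rightarrow> 'r::comm_ring_1 mat list \<Rightarrow> 'r mat" where
  "top_basis n l = word_cochain n
     (\<lambda>u. if u = index_word n (l mod 2^n) then top_value (l div 2^n) u else 0\<^sub>m 3 3)"

lemma cochain_top_basis: "cochain S4 n (top_basis n l)"
  unfolding top_basis_def by (rule cochain_word_cochain)

lemma top_basis_word:
  "length w = n \<Longrightarrow>
   top_basis n l (map letter w) = (if w = index_word n (l mod 2^n) then top_value (l div 2^n) w else 0\<^sub>m 3 3)"
  unfolding top_basis_def by (rule word_cochain_word) simp_all

lemma qcoord_lincomb_top_basis_word:
  assumes w: "length w = n" and c: "c < 6"
  shows "qcoord c (lincomb (3 * 2^n) r (top_basis n) (map letter w))
           = (\<Sum>t<3. r (t * 2^n + word_index n w) * qcoord c (top_value t w))"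
proof -
  have "qcoord c (lincomb (3 * 2^n) r (top_basis n) (map letter w))
      = (\<Sum>l<3 * 2^n. if index_word n (l mod 2^n) = w then r l * qcoord c (top_value (l div 2^n) w) else 0)"
    using c w by (simp add: qcoord_lincomb top_basis_word, intro sum.cong) auto
  also have "\<dots> = (\<Sum>t<3. \<Sum>i<2^n. if index_word n i = w then r (t * 2^n + i) * qcoord c (top_value t w) else 0)"
    unfolding sum_blocks by (intro sum.cong refl) auto
  also have "\<dots> = (\<Sum>t<3. \<Sum>i<2^n. if i = word_index n w then r (t * 2^n + i) * qcoord c (top_value t w) else 0)"
    using w by (intro sum.cong refl) (simp add: index_word_eq_iff)
  also have "\<dots> = (\<Sum>t<3. r (t * 2^n + word_index n w) * qcoord c (top_value t w))"
    using word_index_less[OF w] by simp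
  finally show ?thesis .
qed

lemma cocycle_top_basis: "cocycle S4 (Suc m) (top_basis (Suc m) l :: 'r::comm_ring_1 mat list \<Rightarrow> 'r mat)"
  unfolding cocycle_S4_iff coord_cocycle_def
proof (intro conjI ballI allI impI cochain_top_basis)
  fix xs :: "'r mat list" and c :: nat
  assume xs: "xs \<in> tuples S4 (Suc (Suc m))" and c: "c < 6"
  show "qcoord c (hdiff (Suc m) (top_basis (Suc m) l) xs) = 0"
  proof (rule coord_multilinear_basis[OF coord_multilinear_hdiff[OF cochain_top_basis] _ xs c])
    fix ys :: "'r mat list" and d :: nat
    assume ys: "ys \<in> tuples S4 (Suc (Suc m))" and B: "set ys \<subseteq> S4_basis" and d: "d < 6"
    from S4_basis_tuple_cases[OF ys B] show "qcoord d (hdiff (Suc m) (top_basis (Suc m) l) ys) = 0"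
    proof cases
      case (1 j)
      show ?thesis
        by (rule qcoord_hdiff_normal_upto_one[OF _ _ _ ys 1 d])
           (simp_all add: top_basis_def word_cochain_normal_upto)
    next
      case (2 u)
      have low_zero: "qcoord e (top_basis (Suc m) l (map letter v) :: 'r mat) = 0"
        if "e < 2" "length v = Suc m" for e v
        using that by (simp add: top_basis_word qcoord_top_value)
      have len: "length (tl u) = Suc m" "length (butlast u) = Suc m" using 2 by auto
      show ?thesis unfolding 2(2) using low_zero[OF _ len(1)] low_zero[OF _ len(2)]
        by (simp add: qcoord_hdiff_word[OF cochain_top_basis 2(1) d] lcoord_letter rcoord_letter)
    qed
  qed
qed

lemma cocycle_qcoord_01_word:
  assumes z: "cochain S4 (Suc m) z" "coord_cocycle (Suc m) z" and u: "length u = Suc m"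
  shows "qcoord 0 (z (map letter u)) = (0::'r::comm_ring_1)" "qcoord 1 (z (map letter u)) = (0::'r)"
proof -
  have "qcoord c (hdiff (Suc m) z (map letter (u @ [b]))) = 0" if "c < 6" for b c
  proof -
    have "map letter (u @ [b]) \<in> tuples S4 (Suc (Suc m))" using u by (auto simp: tuples_def)
    then show ?thesis using z(2) that unfolding coord_cocycle_def by blast
  qed
  moreover have "qcoord 2 (hdiff (Suc m) z (map letter (u @ [True]))) = (-1)^(Suc (Suc m)) * qcoord 0 (z (map letter u))"
    using qcoord_hdiff_word[OF z(1), of "u @ [True]" 2] u by (simp add: lcoord_letter rcoord_letter)
  moreover have "qcoord 3 (hdiff (Suc m) z (map letter (u @ [False]))) = (-1)^(Suc (Suc m)) * qcoord 1 (z (map letter u))"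
    using qcoord_hdiff_word[OF z(1), of "u @ [False]" 3] u by (simp add: lcoord_letter rcoord_letter)
  ultimately show "qcoord 0 (z (map letter u)) = 0" "qcoord 1 (z (map letter u)) = 0"
    by (auto intro: minus_one_power_mult_eq_0D)
qed

definition cocycle_coeffs :: "nat \<Rightarrow> ('r::comm_ring_1 mat list \<Rightarrow> 'r mat) \<Rightarrow> nat \<Rightarrow> 'r" where
  "cocycle_coeffs m z l = top_coeff (l div 2^Suc m) ((-1)^Suc m) (\<lambda>c u. qcoord c (z (map letter u)))
     (index_word (Suc m) (l mod 2^Suc m))"

definition cocycle_primitive :: "nat \<Rightarrow> ('r::comm_ring_1 mat list \<Rightarrow> 'r mat) \<Rightarrow> 'r mat list \<Rightarrow> 'r mat" where
  "cocycle_primitive m z = word_cochain m (\<lambda>v.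
     low_mat ((-1)^Suc m * qcoord 2 (z (map letter (v @ [True])))) ((-1)^Suc m * qcoord 3 (z (map letter (v @ [False])))))"

lemma cochain_cocycle_primitive: "cochain S4 m (cocycle_primitive m z)"
  unfolding cocycle_primitive_def by (rule cochain_word_cochain)

lemma cocycle_word_expansion:
  fixes z :: "'r::comm_ring_1 mat list \<Rightarrow> 'r mat"
  assumes z: "cochain S4 (Suc m) z" "coord_cocycle (Suc m) z" and w: "length w = Suc m" and d: "d < 6"
  shows "qcoord d (z (map letter w))
           = qcoord d (lincomb (3 * 2^Suc m) (cocycle_coeffs m z) (top_basis (Suc m)) (map letter w))
             + qcoord d (hdiff m (cocycle_primitive m z) (map letter w))"
proof -
  define sg :: 'r where "sg = (-1)^(Suc m)"
  have sg: "sg * sg = 1" unfolding sg_def by (simp add: power_mult_distrib[symmetric])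
  define K where "K = (\<lambda>c u. qcoord c (z (map letter u)))"
  define G where "G v = low_mat (sg * K 2 (v @ [True])) (sg * K 3 (v @ [False]))" for v
  have g: "cocycle_primitive m z = word_cochain m G"
    unfolding cocycle_primitive_def by (rule arg_cong[where f="word_cochain m"]) (simp add: fun_eq_iff G_def K_def sg_def)
  have w': "w \<noteq> []" "length (tl w) = m" "length (butlast w) = m" using w by auto
  have "qcoord d (lincomb (3 * 2^Suc m) (cocycle_coeffs m z) (top_basis (Suc m)) (map letter w))
      = (\<Sum>t<3. top_coeff t sg K w * qcoord d (top_value t w))"
    unfolding qcoord_lincomb_top_basis_word[OF w d] using word_index_less[OF w]
    by (simp add: cocycle_coeffs_def K_def sg_def index_word_word_index[OF w])
  moreover have "qcoord d (hdiff m (cocycle_primitive m z) (map letter w))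
      = lcoord (letter (hd w)) d (\<lambda>d. qcoord d (G (tl w))) + sg * rcoord (letter (last w)) d (\<lambda>d. qcoord d (G (butlast w)))"
    unfolding qcoord_hdiff_word[OF cochain_cocycle_primitive w d] sg_def[symmetric]
    using w' by (simp add: g word_cochain_word G_def)
  moreover have "K 0 w = 0" "K 1 w = 0"
    unfolding K_def using cocycle_qcoord_01_word[OF z w] by simp_all
  then have "K d w = (\<Sum>t<3. top_coeff t sg K w * qcoord d (top_value t w))
      + (lcoord (letter (hd w)) d (\<lambda>d. qcoord d (G (tl w))) + sg * rcoord (letter (last w)) d (\<lambda>d. qcoord d (G (butlast w))))"
    using top_coeff_residual[OF sg w'(1) _ _ d, of K] unfolding G_def
    by (simp only: diff_diff_eq eq_iff_diff_eq_0[symmetric])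
  ultimately show ?thesis unfolding K_def by simp
qed

lemma normal_cocycle_expansion:
  fixes z :: "'r::comm_ring_1 mat list \<Rightarrow> 'r mat"
  assumes z: "cochain S4 (Suc m) z" "coord_cocycle (Suc m) z" "normal_upto (Suc m) (Suc m) z"
    and xs: "xs \<in> tuples S4 (Suc m)" and c: "c < 6"
  shows "qcoord c (z xs) = qcoord c (lincomb (3 * 2^Suc m) (cocycle_coeffs m z) (top_basis (Suc m)) xs)
                           + qcoord c (hdiff m (cocycle_primitive m z) xs)"
proof -
  define L where "L = lincomb (3 * 2^Suc m) (cocycle_coeffs m z) (top_basis (Suc m))"
  define \<Phi> where "\<Phi> xs c = qcoord c (z xs) - qcoord c (L xs) - qcoord c (hdiff m (cocycle_primitive m z) xs)" for xs c
  have "\<Phi> xs c = 0"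
  proof (rule coord_multilinear_basis[OF _ _ xs c])
    have "coord_multilinear (Suc m) (\<lambda>xs c. qcoord c (z xs) + (-1) * qcoord c (L xs))"
      by (rule coord_multilinear_add)
         (use z(1) lincomb_cochain[OF cochain_top_basis] in \<open>auto simp: cochain_S4_iff L_def\<close>)
    from coord_multilinear_add[OF this coord_multilinear_hdiff[OF cochain_cocycle_primitive], of "-1"]
    show "coord_multilinear (Suc m) \<Phi>" by (rule coord_multilinear_cong) (simp add: \<Phi>_def)
  next
    fix ys :: "'r mat list" and d :: nat
    assume ys: "ys \<in> tuples S4 (Suc m)" and B: "set ys \<subseteq> S4_basis" and d: "d < 6"
    from S4_basis_tuple_cases[OF ys B] show "\<Phi> ys d = 0"
    proof cases
      case (1 j)
      have "qcoord d (z ys) = 0" using z(3) ys 1 d unfolding normal_upto_def by blast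
      moreover have "qcoord d (L ys) = 0"
        using d 1 by (simp add: L_def qcoord_lincomb top_basis_def word_cochain_one)
      moreover have "qcoord d (hdiff m (cocycle_primitive m z) ys) = 0"
        unfolding cocycle_primitive_def
        by (rule qcoord_hdiff_normal_upto_one[OF _ word_cochain_normal_upto _ ys 1 d]) simp_all
      ultimately show ?thesis unfolding \<Phi>_def by simp
    next
      case (2 w)
      then show ?thesis using cocycle_word_expansion[OF z(1,2) 2(1) d] by (simp add: \<Phi>_def L_def)
    qed
  qed
  then show ?thesis by (simp add: \<Phi>_def L_def algebra_simps)
qed

lemma top_basis_spans:
  fixes z :: "'r::comm_ring_1 mat list \<Rightarrow> 'r mat"
  assumes "cocycle S4 (Suc m) z"
  shows "\<exists>r. coboundary S4 (Suc m) (\<lambda>xs. z xs - lincomb (3 * 2^Suc m) r (top_basis (Suc m)) xs)"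
proof -
  have z: "cochain S4 (Suc m) z" "coord_cocycle (Suc m) z" using assms by (auto simp: cocycle_S4_iff)
  obtain z' g1 where z': "cochain S4 (Suc m) z'" "coord_cocycle (Suc m) z'" "normal_upto (Suc m) (Suc m) z'"
      and g1: "cochain S4 m g1"
      and zz': "\<forall>xs\<in>tuples S4 (Suc m). \<forall>c<6. qcoord c (z xs) = qcoord c (z' xs) + qcoord c (hdiff m g1 xs)"
    using cocycle_normalization[OF z] by blast
  define r where "r = cocycle_coeffs m z'"
  define g2 where "g2 = cocycle_primitive m z'"
  have g2: "cochain S4 m g2" unfolding g2_def by (rule cochain_cocycle_primitive)
  have z'r: "qcoord c (z' xs) = qcoord c (lincomb (3 * 2^Suc m) r (top_basis (Suc m)) xs) + qcoord c (hdiff m g2 xs)"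
    if "xs \<in> tuples S4 (Suc m)" "c < 6" for xs c
    unfolding r_def g2_def by (rule normal_cocycle_expansion[OF z' that])
  define g where "g xs = g1 xs + 1 \<cdot>\<^sub>m g2 xs" for xs
  have g: "cochain S4 m g" unfolding g_def by (rule cochain_add_smult[OF g1 g2])
  have "z xs - lincomb (3 * 2^Suc m) r (top_basis (Suc m)) xs - hdiff m g xs \<in> S4"
    if xs: "xs \<in> tuples S4 (Suc m)" for xs
  proof -
    have zc: "z xs \<in> carrier_mat 3 3" using z(1) xs by (simp add: cochain_S4_iff)
    have "qcoord c (z xs - lincomb (3 * 2^Suc m) r (top_basis (Suc m)) xs - hdiff m g xs) = 0" if c: "c < 6" for c
    proof -
      have "qcoord c (hdiff m g xs) = qcoord c (hdiff m g1 xs) + 1 * qcoord c (hdiff m g2 xs)"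
        unfolding g_def using g1 g2 xs c by (intro qcoord_hdiff_add_smult) (auto simp: cochain_S4_iff)
      moreover have "qcoord c (z xs) = qcoord c (z' xs) + qcoord c (hdiff m g1 xs)"
        using zz' xs c by blast
      ultimately show ?thesis
        using zc z'r[OF xs c] by (simp add: qcoord_minus minus_carrier_mat)
    qed
    then show ?thesis by (subst S4_iff_qcoord) (auto intro: minus_carrier_mat)
  qed
  then show ?thesis
    unfolding coboundary_def by (intro exI[of _ r] disjI2 exI[of _ m] exI[of _ g] conjI g ballI) auto
qed

lemma top_basis_independent:
  fixes r :: "nat \<Rightarrow> 'r::comm_ring_1"
  assumes cb: "coboundary S4 (Suc m) (lincomb (3 * 2^Suc m) r (top_basis (Suc m)))" and l: "l < 3 * 2^Suc m"
  shows "r l = 0"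
proof -
  define N :: nat where "N = 2^Suc m"
  define sg :: 'r where "sg = (-1)^(Suc m)"
  have sg: "sg * sg = 1" unfolding sg_def by (simp add: power_mult_distrib[symmetric])
  obtain g where g: "cochain S4 m g"
    and gE: "\<forall>xs\<in>tuples S4 (Suc m). lincomb (3 * N) r (top_basis (Suc m)) xs - hdiff m g xs \<in> S4"
    using cb unfolding coboundary_def N_def by auto
  define KL where "KL c v = qcoord c (lincomb (3*N) r (top_basis (Suc m)) (map letter v))" for c v
  define Kg where "Kg d q = qcoord d (g (map letter q))" for d q
  have KL: "KL c v = lcoord (letter (hd v)) c (\<lambda>d. Kg d (tl v)) + sg * rcoord (letter (last v)) c (\<lambda>d. Kg d (butlast v))"
    if c: "c < 6" and v: "length v = Suc m" for c v
  proof -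
    have "map letter v \<in> tuples S4 (Suc m)" using v by (auto simp: tuples_def)
    then have "qcoord c (lincomb (3 * N) r (top_basis (Suc m)) (map letter v) - hdiff m g (map letter v)) = 0"
      using gE c by (subst (asm) S4_iff_qcoord) auto
    then show ?thesis
      unfolding KL_def Kg_def sg_def qcoord_hdiff_word[OF g v c, symmetric] by (simp add: qcoord_minus)
  qed
  define t where "t = l div N"
  define w where "w = index_word (Suc m) (l mod N)"
  have t: "t < 3" using l unfolding t_def N_def by (simp add: less_mult_imp_div_less)
  have "length w = Suc m" unfolding w_def N_def by (simp add: length_index_word)
  then have w: "length w = Suc m" "w \<noteq> []" by auto
  have "word_index (Suc m) w = l mod N"
    unfolding w_def N_def by (simp add: word_index_index_word)
  then have lw: "l = t * N + word_index (Suc m) w"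
    unfolding t_def by simp
  have KL_sum: "KL c v = (\<Sum>t<3. r (t * N + word_index (Suc m) v) * qcoord c (top_value t v))"
    if "c < 6" "length v = Suc m" for c v
    unfolding KL_def N_def by (rule qcoord_lincomb_top_basis_word[OF that(2,1)])
  have "r l = top_coeff t sg KL w"
    unfolding lw using t w
    by (auto simp: top_coeff_def KL_sum sum_lessThan_3 qcoord_top_value dest!: less_3_cases)
  also have "\<dots> = top_coeff t sg (\<lambda>c v. lcoord (letter (hd v)) c (\<lambda>d. Kg d (tl v))
                                    + sg * rcoord (letter (last v)) c (\<lambda>d. Kg d (butlast v))) w"
    by (rule top_coeff_cong[OF _ w(2)]) (simp add: KL w(1))
  also have "\<dots> = 0"
    by (rule top_coeff_hdiff_word[OF sg t w(2)])
  finally show ?thesis .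
qed

lemma HH_free_of_rank_Suc: "HH_free_of_rank (S4::'r::comm_ring_1 mat set) (Suc m) (3 * 2^(Suc m))"
  unfolding HH_free_of_rank_def
  by (intro exI[of _ "top_basis (Suc m)"] conjI allI impI cocycle_top_basis top_basis_spans)
     (auto intro: top_basis_independent)

theorem theorem5p6:
  shows "\<forall>n. HH_free_of_rank (S4 :: 'r::comm_ring_1 mat set) n (if n = 0 then 4 else 3 * 2 ^ n)"
proof
  fix n :: nat
  show "HH_free_of_rank (S4 :: 'r::comm_ring_1 mat set) n (if n = 0 then 4 else 3 * 2 ^ n)"
  proof (cases n)
    case 0 then show ?thesis using HH_free_of_rank_0 by simp
  next
    case (Suc m) then show ?thesis using HH_free_of_rank_Suc[of m] by simp
  qed
qed

end
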